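(* Let $G=0$, $Q$, $R_Q$ and $S=R_Q^*+Q'$ be as follows: $Q$ is an adjoint-symmetry of $G=0$ with $G'^*(Q)=R_Q(G)$ identically and $E_u(QG)\not\equiv0$. Let $P\partial_u$ be a symmetry of $G=0$ with $G'(P)=R_P(G)$ identically for a linear total-differential operator $R_P$. Write $S^*=\sum_JW^JD_J$ and set $\mathrm{pr}\,\hat X_P(S^* ):=\sum_J (W^J)'(P)\,D_J$. Then the adjoint-symmetry $S(P)$ is a multiplier for a conservation law of $G=0$ (i.e. $E_u(S(P)G)\equiv0$) if and only if $$\big(\mathrm{pr}\,\hat X_P(S^* )+S^*R_P+P'^*S^*\big)G=0$$ holds identically (off $\mathcal E$).
   Context: Setting: independent variables $x=(x^1,\dots,x^n)$, one dependent variable $u$; differential functions are smooth functions of $x,u$ and finitely many $u_J$; $D_J$ are total derivatives. Fréchet derivative $f'=\sum_J(\partial f/\partial u_J)D_J$, so $(W^J)'(P)=\sum_K(\partial W^J/\partial u_K)D_KP$. Formal adjoint ${}^*$ of $\sum_Ja^JD_J$ is $A\mapsto\sum_J(-1)^{|J|}D_J(a^JA)$. $E_u(f)=\sum_J(-1)^{|J|}D_J(\partial f/\partial u_J)$. $\mathcal E$ is the solution space of $G=0$. Symmetry: $G'(P)|_{\mathcal E}=0$; adjoint-symmetry: $G'^*(Q)|_{\mathcal E}=0$; multiplier: $E_u(QG)\equiv0$. *)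

theory Defs
  imports "HOL-Analysis.Analysis"
begin

text \<open>Jet space over n independent variables indexed by a finite type 'i and one
dependent variable u.  A multi-index J is a function 'i => nat (J i = number of
differentiations in x^i).\<close>

datatype 'i coord = X 'i | U "'i \<Rightarrow> nat"

type_synonym 'i jet = "'i coord \<Rightarrow> real"
type_synonym 'i dfun = "'i jet \<Rightarrow> real"
type_synonym 'i dop = "('i \<Rightarrow> nat) \<Rightarrow> 'i dfun"

definition pd :: "'i coord \<Rightarrow> 'i dfun \<Rightarrow> 'i dfun" where
  "pd c f = (\<lambda>z. deriv (\<lambda>t. f (z(c := t))) (z c))"

definition iterpd :: "'i coord list \<Rightarrow> 'i dfun \<Rightarrow> 'i dfun" where
  "iterpd cs f = foldr pd cs f"

definition difffun :: "'i dfun \<Rightarrow> bool" where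
  "difffun f \<longleftrightarrow>
     (\<exists>S. finite S \<and> (\<forall>z w. (\<forall>c\<in>S. z c = w c) \<longrightarrow> f z = f w)) \<and>
     (\<forall>cs. continuous_on UNIV (iterpd cs f)) \<and>
     (\<forall>cs c z. (\<lambda>t. iterpd cs f (z(c := t))) differentiable (at (z c)))"

definition Dtot :: "'i \<Rightarrow> 'i dfun \<Rightarrow> 'i dfun" where
  "Dtot i f = (\<lambda>z. pd (X i) f z +
      (\<Sum>J | pd (U J) f \<noteq> (\<lambda>z. 0). z (U (J(i := J i + 1))) * pd (U J) f z))"

definition mlen :: "('i::finite \<Rightarrow> nat) \<Rightarrow> nat" where
  "mlen J = (\<Sum>i\<in>UNIV. J i)"

primrec DJn :: "nat \<Rightarrow> ('i \<Rightarrow> nat) \<Rightarrow> 'i dfun \<Rightarrow> 'i dfun" where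
  "DJn 0 J f = f"
| "DJn (Suc k) J f =
     (let i = (SOME i. 0 < J i) in Dtot i (DJn k (J(i := J i - 1)) f))"

text \<open>D_J (total derivatives commute, so the order chosen is immaterial).\<close>
definition DJ :: "('i::finite \<Rightarrow> nat) \<Rightarrow> 'i dfun \<Rightarrow> 'i dfun" where
  "DJ J f = DJn (mlen J) J f"

text \<open>Linear total-differential operator sum_J a^J D_J, given by its coefficients.\<close>
definition dsupp :: "'i dop \<Rightarrow> ('i \<Rightarrow> nat) set" where
  "dsupp A = {J. A J \<noteq> (\<lambda>z. 0)}"

definition is_dop :: "'i dop \<Rightarrow> bool" where
  "is_dop A \<longleftrightarrow> finite (dsupp A) \<and> (\<forall>J. difffun (A J))"

definition applyop :: "('i::finite) dop \<Rightarrow> 'i dfun \<Rightarrow> 'i dfun" where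
  "applyop A F = (\<lambda>z. \<Sum>J\<in>dsupp A. A J z * DJ J F z)"

definition adjapply :: "('i::finite) dop \<Rightarrow> 'i dfun \<Rightarrow> 'i dfun" where
  "adjapply A B = (\<lambda>z. \<Sum>J\<in>dsupp A. (-1::real) ^ mlen J * DJ J (\<lambda>w. A J w * B w) z)"

definition frechet_op :: "'i dfun \<Rightarrow> 'i dop" where
  "frechet_op f = (\<lambda>J. pd (U J) f)"

definition frechet :: "('i::finite) dfun \<Rightarrow> 'i dfun \<Rightarrow> 'i dfun" where
  "frechet f P = applyop (frechet_op f) P"

definition euler :: "('i::finite) dfun \<Rightarrow> 'i dfun" where
  "euler f = adjapply (frechet_op f) (\<lambda>z. 1)"

end

theory Submission
  imports Defs
begin

text \<open>Write \<open>S\<^sup>*(G) = E\<close>. Integrating by parts, \<open>S(P) G\<close> and \<open>E P\<close> differ by a divergence, so they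
have the same Euler--Lagrange expression; and since \<open>S\<^sup>*\<close> is characterised by its pairing with
test functions modulo divergences, the adjoint-symmetry identity \<open>G'\<^sup>*(Q) = R\<^sub>Q(G)\<close> gives
\<open>E = E\<^sub>u(QG)\<close>. Any Euler--Lagrange expression has a self-adjoint Frechet derivative (the
Helmholtz conditions), so the product rule for \<open>E\<^sub>u\<close> yields
\<open>E\<^sub>u(S(P) G) = E'(P) + P'\<^sup>*(E)\<close>. Finally \<open>E'(P) = pr X\<^sub>P(S\<^sup>*) G + S\<^sup>*(G'(P))\<close> with
\<open>G'(P) = R\<^sub>P(G)\<close>. Both characterisations rest on the fundamental lemma: a differential function
\<open>Y\<close> with \<open>E\<^sub>u(Y B) = 0\<close> for all \<open>B\<close> vanishes, which is tested at a point \<open>z\<^sub>0\<close> with \<open>B\<close> equal to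
\<open>u\<close> minus its Taylor polynomial in \<open>x\<close> at \<open>z\<^sub>0\<close>.\<close>

section \<open>Partial derivatives on the jet space\<close>

definition line_differentiable :: "'i dfun \<Rightarrow> bool" where
  "line_differentiable f \<longleftrightarrow> (\<forall>c z. (\<lambda>t. f (z(c := t))) differentiable (at (z c)))"

definition smooth :: "'i dfun \<Rightarrow> bool" where
  "smooth f \<longleftrightarrow> (\<forall>cs. continuous_on UNIV (iterpd cs f) \<and> line_differentiable (iterpd cs f))"

definition depends_only_on :: "'i coord set \<Rightarrow> 'i dfun \<Rightarrow> bool" where
  "depends_only_on S f \<longleftrightarrow> (\<forall>z w. (\<forall>c\<in>S. z c = w c) \<longrightarrow> f z = f w)"

lemma difffun_iff: "difffun f \<longleftrightarrow> (\<exists>S. finite S \<and> depends_only_on S f) \<and> smooth f"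
  unfolding difffun_def depends_only_on_def smooth_def line_differentiable_def by blast

lemma line_differentiable_DERIV_at:
  assumes "line_differentiable f"
  shows "((\<lambda>t. f (z(c := t))) has_real_derivative pd c f (z(c := t))) (at t)"
proof -
  have "(\<lambda>s. f (z(c := t, c := s))) differentiable (at ((z(c:=t)) c))"
    using assms unfolding line_differentiable_def by blast
  then have "(\<lambda>s. f (z(c := s))) differentiable (at t)" by simp
  then show ?thesis by (simp add: pd_def DERIV_deriv_iff_real_differentiable)
qed

lemma line_differentiable_DERIV:
  "line_differentiable f \<Longrightarrow> ((\<lambda>t. f (z(c := t))) has_real_derivative pd c f z) (at (z c))"
  using line_differentiable_DERIV_at[of f z c "z c"] by simp

lemma line_differentiableI:
  assumes "\<And>c z. \<exists>D. ((\<lambda>t. f (z(c := t))) has_real_derivative D) (at (z c))"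
  shows "line_differentiable f"
  using assms unfolding line_differentiable_def real_differentiable_def by blast

lemma pd_eqI:
  assumes "\<And>z. ((\<lambda>t. f (z(c := t))) has_real_derivative g z) (at (z c))"
  shows "pd c f = g"
  using assms unfolding pd_def by (intro ext DERIV_imp_deriv)

lemma line_differentiable_const: "line_differentiable (\<lambda>z. k)"
  by (rule line_differentiableI) (auto intro: derivative_eq_intros)

lemma pd_const: "pd c (\<lambda>z. k) = (\<lambda>z. 0)"
  by (rule pd_eqI) (auto intro: derivative_eq_intros)

lemma line_coord: "(\<lambda>t. (z(c := t)) d) = (if c = d then (\<lambda>t. t) else (\<lambda>t. z d))"
  by auto

lemma line_differentiable_coord: "line_differentiable (\<lambda>z. z d)"
proof (rule line_differentiableI)
  fix c and z :: "'a jet"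
  show "\<exists>D. ((\<lambda>t. (z(c := t)) d) has_real_derivative D) (at (z c))"
    by (cases "c = d") (auto simp: line_coord intro: derivative_eq_intros)
qed

lemma pd_coord: "pd c (\<lambda>z. z d) = (\<lambda>z. if c = d then 1 else 0)"
  by (rule pd_eqI) (auto simp: line_coord intro: derivative_eq_intros)

lemma line_differentiable_add:
  "line_differentiable f \<Longrightarrow> line_differentiable g \<Longrightarrow> line_differentiable (\<lambda>z. f z + g z)"
  unfolding line_differentiable_def by auto

lemma line_differentiable_mult:
  "line_differentiable f \<Longrightarrow> line_differentiable g \<Longrightarrow> line_differentiable (\<lambda>z. f z * g z)"
  unfolding line_differentiable_def by auto

lemma line_differentiable_sum:
  "(\<And>a. a \<in> A \<Longrightarrow> line_differentiable (F a)) \<Longrightarrow> line_differentiable (\<lambda>z. \<Sum>a\<in>A. F a z)"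
proof (induction A rule: infinite_finite_induct)
  case (insert x F) then show ?case by (simp add: line_differentiable_add)
qed (auto simp: line_differentiable_const)

lemma pd_add: "line_differentiable f \<Longrightarrow> line_differentiable g \<Longrightarrow>
    pd c (\<lambda>z. f z + g z) = (\<lambda>z. pd c f z + pd c g z)"
  by (rule pd_eqI) (auto intro!: derivative_eq_intros line_differentiable_DERIV)

lemma pd_mult: "line_differentiable f \<Longrightarrow> line_differentiable g \<Longrightarrow>
    pd c (\<lambda>z. f z * g z) = (\<lambda>z. pd c f z * g z + f z * pd c g z)"
  by (rule pd_eqI) (auto intro!: derivative_eq_intros line_differentiable_DERIV)

lemma pd_diff: "line_differentiable f \<Longrightarrow> line_differentiable g \<Longrightarrow>
    pd c (\<lambda>z. f z - g z) = (\<lambda>z. pd c f z - pd c g z)"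
  by (rule pd_eqI) (auto intro!: derivative_eq_intros line_differentiable_DERIV)

lemma pd_cmult: "line_differentiable f \<Longrightarrow> pd c (\<lambda>z. k * f z) = (\<lambda>z. k * pd c f z)"
  by (rule pd_eqI) (auto intro!: derivative_eq_intros line_differentiable_DERIV)

lemma pd_sum: "(\<And>a. a \<in> A \<Longrightarrow> line_differentiable (F a)) \<Longrightarrow>
    pd c (\<lambda>z. \<Sum>a\<in>A. F a z) = (\<lambda>z. \<Sum>a\<in>A. pd c (F a) z)"
proof (induction A rule: infinite_finite_induct)
  case (insert x F)
  then show ?case by (simp add: pd_add line_differentiable_sum)
qed (simp_all add: pd_const)

lemma line_differentiable_sum_list:
  fixes ps :: "('i dfun \<times> 'i dfun) list"
  shows "(\<And>p. p \<in> set ps \<Longrightarrow> line_differentiable (fst p) \<and> line_differentiable (snd p)) \<Longrightarrow>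
   line_differentiable (\<lambda>z. \<Sum>p\<leftarrow>ps. fst p z * snd p z)"
  by (induction ps) (simp_all add: line_differentiable_const line_differentiable_add line_differentiable_mult)

lemma continuous_on_sum_list:
  fixes ps :: "('i dfun \<times> 'i dfun) list"
  shows "(\<And>p. p \<in> set ps \<Longrightarrow> continuous_on UNIV (fst p) \<and> continuous_on UNIV (snd p)) \<Longrightarrow>
   continuous_on UNIV (\<lambda>z. \<Sum>p\<leftarrow>ps. fst p z * snd p z)"
proof (induction ps)
  case (Cons p ps)
  have "continuous_on UNIV (fst p)" "continuous_on UNIV (snd p)" using Cons.prems by auto
  moreover have "continuous_on UNIV (\<lambda>z. \<Sum>p\<leftarrow>ps. fst p z * snd p z)" using Cons by simp
  ultimately have "continuous_on UNIV (\<lambda>z. fst p z * snd p z + (\<Sum>p\<leftarrow>ps. fst p z * snd p z))"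
    by (intro continuous_on_add continuous_on_mult') auto
  then show ?case by simp
qed simp

lemma pd_sum_list:
  fixes ps :: "('i dfun \<times> 'i dfun) list"
  assumes "\<And>p. p \<in> set ps \<Longrightarrow> line_differentiable (fst p) \<and> line_differentiable (snd p)"
  shows "pd c (\<lambda>z. \<Sum>p\<leftarrow>ps. fst p z * snd p z) =
    (\<lambda>z. \<Sum>p\<leftarrow>concat (map (\<lambda>p. [(pd c (fst p), snd p), (fst p, pd c (snd p))]) ps). fst p z * snd p z)"
  using assms
proof (induction ps)
  case (Cons p ps)
  have "line_differentiable (\<lambda>z. \<Sum>p\<leftarrow>ps. fst p z * snd p z)"
    using Cons.prems by (intro line_differentiable_sum_list) auto
  with Cons show ?case by (simp add: pd_add pd_mult line_differentiable_mult add.assoc)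
qed (simp add: pd_const)

lemma iterpd_Nil[simp]: "iterpd [] f = f" by (simp add: iterpd_def)
lemma iterpd_Cons[simp]: "iterpd (c#cs) f = pd c (iterpd cs f)" by (simp add: iterpd_def)
lemma iterpd_append: "iterpd (cs @ ds) f = iterpd cs (iterpd ds f)" by (simp add: iterpd_def)

lemma smooth_if_pd_closed:
  assumes "h \<in> C"
    and "\<And>g. g \<in> C \<Longrightarrow> continuous_on UNIV g \<and> line_differentiable g"
    and "\<And>g c. g \<in> C \<Longrightarrow> pd c g \<in> C"
  shows "smooth h"
proof -
  have "iterpd cs h \<in> C" for cs by (induction cs) (use assms in auto)
  then show ?thesis using assms unfolding smooth_def by blast
qed

lemma smooth_line_differentiable: "smooth f \<Longrightarrow> line_differentiable f"
  unfolding smooth_def by (metis iterpd_Nil)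

lemma smooth_continuous_on: "smooth f \<Longrightarrow> continuous_on UNIV f"
  unfolding smooth_def by (metis iterpd_Nil)

lemma smooth_pd: "smooth f \<Longrightarrow> smooth (pd c f)"
  unfolding smooth_def by (metis iterpd_append iterpd_Cons iterpd_Nil)

text \<open>Products are handled through the class of finite sums of products of smooth functions,
which, unlike the class of products, is closed under \<^const>\<open>pd\<close>.\<close>

lemma smooth_sum_list:
  assumes "\<And>p. p \<in> set ps \<Longrightarrow> smooth (fst p) \<and> smooth (snd p)"
  shows "smooth (\<lambda>z. \<Sum>p\<leftarrow>ps. fst p z * snd p z)"
proof (rule smooth_if_pd_closed)
  let ?C = "{\<lambda>z. \<Sum>p\<leftarrow>ps. fst p z * snd p z | ps. \<forall>p\<in>set ps. smooth (fst p) \<and> smooth (snd p)}"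
  show "(\<lambda>z. \<Sum>p\<leftarrow>ps. fst p z * snd p z) \<in> ?C" using assms by blast
  fix g assume "g \<in> ?C"
  then obtain qs where q: "\<forall>p\<in>set qs. smooth (fst p) \<and> smooth (snd p)"
    and g: "g = (\<lambda>z. \<Sum>p\<leftarrow>qs. fst p z * snd p z)" by blast
  show "continuous_on UNIV g \<and> line_differentiable g" unfolding g
    using q by (intro conjI continuous_on_sum_list line_differentiable_sum_list)
      (auto intro: smooth_line_differentiable smooth_continuous_on)
  fix c
  have "pd c g = (\<lambda>z. \<Sum>p\<leftarrow>concat (map (\<lambda>p. [(pd c (fst p), snd p), (fst p, pd c (snd p))]) qs). fst p z * snd p z)"
    unfolding g using q by (intro pd_sum_list) (auto intro: smooth_line_differentiable)
  moreover have "\<forall>p\<in>set (concat (map (\<lambda>p. [(pd c (fst p), snd p), (fst p, pd c (snd p))]) qs)). smooth (fst p) \<and> smooth (snd p)"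
    using q by (auto intro: smooth_pd)
  ultimately show "pd c g \<in> ?C" by blast
qed

lemma smooth_const: "smooth (\<lambda>z. k)"
  by (rule smooth_if_pd_closed[where C="range (\<lambda>k z. k)"])
     (auto simp: line_differentiable_const pd_const)

lemma smooth_coord: "smooth (\<lambda>z. z d)"
  by (rule smooth_if_pd_closed[where C="insert (\<lambda>z. z d) (range (\<lambda>k z. k))"])
     (auto simp: line_differentiable_const pd_const line_differentiable_coord pd_coord)

lemma smooth_mult: "smooth f \<Longrightarrow> smooth g \<Longrightarrow> smooth (\<lambda>z. f z * g z)"
  using smooth_sum_list[of "[(f,g)]"] by simp

lemma smooth_add:
  assumes "smooth f" "smooth g"
  shows "smooth (\<lambda>z. f z + g z)"
proof -
  have "smooth (\<lambda>z. \<Sum>p\<leftarrow>[(f, \<lambda>z. 1), (g, \<lambda>z. 1)]. fst p z * snd p z)"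
    by (rule smooth_sum_list) (use assms smooth_const in auto)
  then show ?thesis by simp
qed

lemma smooth_cmult: "smooth f \<Longrightarrow> smooth (\<lambda>z. k * f z)"
  using smooth_mult[OF smooth_const] by blast

lemma smooth_diff: "smooth f \<Longrightarrow> smooth g \<Longrightarrow> smooth (\<lambda>z. f z - g z)"
  using smooth_add[OF _ smooth_cmult[of g "-1"]] by simp

lemma depends_only_on_mono: "depends_only_on S f \<Longrightarrow> S \<subseteq> T \<Longrightarrow> depends_only_on T f"
  unfolding depends_only_on_def by blast

lemma depends_only_on_const: "depends_only_on S (\<lambda>z. k)"
  unfolding depends_only_on_def by simp

lemma depends_only_on_coord: "d \<in> S \<Longrightarrow> depends_only_on S (\<lambda>z. z d)"
  unfolding depends_only_on_def by metis

lemma depends_only_on_add: "depends_only_on S f \<Longrightarrow> depends_only_on S g \<Longrightarrow> depends_only_on S (\<lambda>z. f z + g z)"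
  unfolding depends_only_on_def by metis

lemma depends_only_on_mult: "depends_only_on S f \<Longrightarrow> depends_only_on S g \<Longrightarrow> depends_only_on S (\<lambda>z. f z * g z)"
  unfolding depends_only_on_def by metis

lemma depends_only_on_diff: "depends_only_on S f \<Longrightarrow> depends_only_on S g \<Longrightarrow> depends_only_on S (\<lambda>z. f z - g z)"
  unfolding depends_only_on_def by metis

lemma depends_only_on_sum: "(\<And>a. a \<in> A \<Longrightarrow> depends_only_on S (F a)) \<Longrightarrow> depends_only_on S (\<lambda>z. \<Sum>a\<in>A. F a z)"
  unfolding depends_only_on_def by (intro allI impI sum.cong) auto

lemma pd_eq_0_if_depends_only_on:
  assumes "depends_only_on S f" "c \<notin> S"
  shows "pd c f = (\<lambda>z. 0)"
proof -
  have "(\<lambda>t. f (z(c := t))) = (\<lambda>t. f z)" for z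
    using assms unfolding depends_only_on_def by (intro ext) (metis fun_upd_other)
  then show ?thesis unfolding pd_def by (simp add: DERIV_imp_deriv[OF DERIV_const])
qed

lemma depends_only_on_pd:
  assumes f: "depends_only_on S f"
  shows "depends_only_on S (pd c f)"
proof (cases "c \<in> S")
  case True
  show ?thesis unfolding depends_only_on_def pd_def
  proof (intro allI impI)
    fix z w :: "'a jet" assume zw: "\<forall>d\<in>S. z d = w d"
    have "(\<lambda>t. f (z(c := t))) = (\<lambda>t. f (w(c := t)))"
      using f zw unfolding depends_only_on_def by (intro ext) auto
    then show "deriv (\<lambda>t. f (z(c := t))) (z c) = deriv (\<lambda>t. f (w(c := t))) (w c)"
      using zw True by simp
  qed
next
  case False
  then show ?thesis using pd_eq_0_if_depends_only_on[OF f] depends_only_on_const by metis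
qed

lemma mixed_difference_MVT:
  fixes g gs gst :: "real \<Rightarrow> real \<Rightarrow> real"
  assumes ds: "\<And>s t. ((\<lambda>s. g s t) has_real_derivative gs s t) (at s)"
    and dst: "\<And>s t. ((\<lambda>t. gs s t) has_real_derivative gst s t) (at t)"
    and h: "h > 0"
  obtains \<xi> \<eta> where "a < \<xi>" "\<xi> < a + h" "b < \<eta>" "\<eta> < b + h"
    "g (a+h) (b+h) - g (a+h) b - g a (b+h) + g a b = h * h * gst \<xi> \<eta>"
proof -
  have "\<exists>\<xi>. a < \<xi> \<and> \<xi> < a + h \<and> (\<lambda>s. g s (b+h) - g s b) (a+h) - (\<lambda>s. g s (b+h) - g s b) a
        = (a + h - a) * (gs \<xi> (b+h) - gs \<xi> b)"
    by (rule MVT2) (use h in \<open>auto intro!: derivative_eq_intros ds\<close>)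
  then obtain \<xi> where x: "a < \<xi>" "\<xi> < a + h" and e1:
    "g (a+h) (b+h) - g (a+h) b - (g a (b+h) - g a b) = h * (gs \<xi> (b+h) - gs \<xi> b)" by auto
  have "\<exists>\<eta>. b < \<eta> \<and> \<eta> < b + h \<and> gs \<xi> (b+h) - gs \<xi> b = (b + h - b) * gst \<xi> \<eta>"
    by (rule MVT2) (use h dst in auto)
  then obtain \<eta> where y: "b < \<eta>" "\<eta> < b + h" and e2: "gs \<xi> (b+h) - gs \<xi> b = h * gst \<xi> \<eta>" by auto
  show ?thesis using x y e1 e2 by (intro that[of \<xi> \<eta>]) (auto simp: algebra_simps)
qed

text \<open>The mixed second difference of \<open>f\<close> on a square of side \<open>h\<close> equals \<open>h\<^sup>2\<close> times either mixed
partial, each evaluated at some point of the square.\<close>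

lemma mixed_partials_agree_nearby:
  assumes sf: "smooth f" and cd: "c \<noteq> d" and h: "h > 0"
  obtains s t s' t' where "z c < s" "s < z c + h" "z d < t" "t < z d + h"
    "z c < s'" "s' < z c + h" "z d < t'" "t' < z d + h"
    "pd d (pd c f) (z(c := s, d := t)) = pd c (pd d f) (z(c := s', d := t'))"
proof -
  define g where "g s t = f (z(c := s, d := t))" for s t
  have upd: "z(d := t, c := s) = z(c := s, d := t)" for s t using cd by (simp add: fun_upd_twist)
  have lf: "line_differentiable f" and lc: "line_differentiable (pd c f)" and ld: "line_differentiable (pd d f)"
    using sf by (auto intro: smooth_line_differentiable smooth_pd)
  have D1: "((\<lambda>s. g s t) has_real_derivative pd c f (z(c := s, d := t))) (at s)" for s t
    using line_differentiable_DERIV_at[OF lf, of "z(d := t)" c s] unfolding g_def by (simp add: upd)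
  have D2: "((\<lambda>t. g s t) has_real_derivative pd d f (z(c := s, d := t))) (at t)" for s t
    using line_differentiable_DERIV_at[OF lf, of "z(c := s)" d t] unfolding g_def by simp
  have D3: "((\<lambda>t. pd c f (z(c := s, d := t))) has_real_derivative pd d (pd c f) (z(c := s, d := t))) (at t)" for s t
    using line_differentiable_DERIV_at[OF lc, of "z(c := s)" d t] by simp
  have D4: "((\<lambda>s. pd d f (z(c := s, d := t))) has_real_derivative pd c (pd d f) (z(c := s, d := t))) (at s)" for s t
    using line_differentiable_DERIV_at[OF ld, of "z(d := t)" c s] by (simp add: upd)
  obtain s t where st: "z c < s" "s < z c + h" "z d < t" "t < z d + h"
    and e1: "g (z c + h) (z d + h) - g (z c + h) (z d) - g (z c) (z d + h) + g (z c) (z d)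
             = h * h * pd d (pd c f) (z(c := s, d := t))"
    using mixed_difference_MVT[where g=g, OF D1 D3 h] by blast
  obtain t' s' where st': "z d < t'" "t' < z d + h" "z c < s'" "s' < z c + h"
    and e2: "g (z c + h) (z d + h) - g (z c) (z d + h) - g (z c + h) (z d) + g (z c) (z d)
             = h * h * pd c (pd d f) (z(c := s', d := t'))"
    using mixed_difference_MVT[where g="\<lambda>t s. g s t", OF D2 D4 h] by blast
  have "pd d (pd c f) (z(c := s, d := t)) = pd c (pd d f) (z(c := s', d := t'))"
    using e1 e2 h by (simp add: algebra_simps)
  with st st' show ?thesis by (intro that) auto
qed

lemma LIMSEQ_squeeze_inverse:
  fixes x :: "nat \<Rightarrow> real"
  assumes "\<And>n. a < x n \<and> x n < a + inverse (real (Suc n))"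
  shows "x \<longlonglongrightarrow> a"
proof (rule tendsto_sandwich[of "\<lambda>n. a" _ _ "\<lambda>n. a + inverse (real (Suc n))"])
  show "\<forall>\<^sub>F n in sequentially. a \<le> x n" "\<forall>\<^sub>F n in sequentially. x n \<le> a + inverse (real (Suc n))"
    using assms by (auto intro!: always_eventually less_imp_le)
  show "(\<lambda>n. a + inverse (real (Suc n))) \<longlonglongrightarrow> a"
    using tendsto_add[OF tendsto_const LIMSEQ_inverse_real_of_nat, of a] by simp
qed simp

lemma continuous_on_plane_slice:
  assumes "continuous_on UNIV (M :: 'i dfun)"
  shows "continuous_on UNIV (\<lambda>p::real\<times>real. M (z(c := fst p, d := snd p)))"
proof -
  have "continuous_on UNIV (\<lambda>p::real\<times>real. z(c := fst p, d := snd p))"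
  proof (intro continuous_on_coordinatewise_then_product)
    fix i
    have "(\<lambda>p::real\<times>real. (z(c := fst p, d := snd p)) i)
        = (\<lambda>p. if i = d then snd p else if i = c then fst p else z i)"
      by auto
    moreover have "continuous_on UNIV (\<lambda>p::real\<times>real. if i = d then snd p else if i = c then fst p else z i)"
      by (cases "i = d"; cases "i = c") (auto intro!: continuous_intros)
    ultimately show "continuous_on UNIV (\<lambda>p::real\<times>real. (z(c := fst p, d := snd p)) i)"
      by metis
  qed
  then show ?thesis using assms continuous_on_compose2 by blast
qed

lemma pd_commute:
  assumes sf: "smooth f"
  shows "pd c (pd d f) = pd d (pd c f)"
proof (cases "c = d")
  case False
  show ?thesis
  proof
    fix z :: "'a jet"
    let ?M1 = "pd d (pd c f)" and ?M2 = "pd c (pd d f)" and ?\<delta> = "\<lambda>n. inverse (real (Suc n))"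
    have "\<exists>s t s' t'. (z c < s \<and> s < z c + ?\<delta> n) \<and> (z d < t \<and> t < z d + ?\<delta> n) \<and>
        (z c < s' \<and> s' < z c + ?\<delta> n) \<and> (z d < t' \<and> t' < z d + ?\<delta> n) \<and>
        ?M1 (z(c := s, d := t)) = ?M2 (z(c := s', d := t'))" for n
      by (rule mixed_partials_agree_nearby[OF sf False, of "?\<delta> n" z]) auto
    then obtain s t s' t' where st: "\<And>n. (z c < s n \<and> s n < z c + ?\<delta> n) \<and> (z d < t n \<and> t n < z d + ?\<delta> n) \<and>
        (z c < s' n \<and> s' n < z c + ?\<delta> n) \<and> (z d < t' n \<and> t' n < z d + ?\<delta> n) \<and>
        ?M1 (z(c := s n, d := t n)) = ?M2 (z(c := s' n, d := t' n))"
      by metis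
    have lim: "(\<lambda>n. (s n, t n)) \<longlonglongrightarrow> (z c, z d)" "(\<lambda>n. (s' n, t' n)) \<longlonglongrightarrow> (z c, z d)"
      using st by (auto intro!: tendsto_Pair LIMSEQ_squeeze_inverse)
    have cont: "continuous_on UNIV ?M1" "continuous_on UNIV ?M2"
      using sf by (auto intro!: smooth_continuous_on smooth_pd)
    have "(\<lambda>n. ?M1 (z(c := s n, d := t n))) \<longlonglongrightarrow> ?M1 (z(c := z c, d := z d))"
      using continuous_on_tendsto_compose[OF continuous_on_plane_slice[OF cont(1), of z c d] lim(1)] by simp
    moreover have "(\<lambda>n. ?M2 (z(c := s' n, d := t' n))) \<longlonglongrightarrow> ?M2 (z(c := z c, d := z d))"
      using continuous_on_tendsto_compose[OF continuous_on_plane_slice[OF cont(2), of z c d] lim(2)] by simp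
    ultimately have "?M1 z = ?M2 z" using LIMSEQ_unique st by fastforce
    then show "?M2 z = ?M1 z" by simp
  qed
qed simp

section \<open>Differential functions\<close>

lemma difffun_smooth: "difffun f \<Longrightarrow> smooth f"
  using difffun_iff by blast

lemma difffun_line_differentiable: "difffun f \<Longrightarrow> line_differentiable f"
  using difffun_iff smooth_line_differentiable by blast

lemma difffun_finite_dependence: "difffun f \<Longrightarrow> \<exists>S. finite S \<and> depends_only_on S f"
  using difffun_iff by blast

lemma difffunI: "finite S \<Longrightarrow> depends_only_on S f \<Longrightarrow> smooth f \<Longrightarrow> difffun f"
  unfolding difffun_iff by blast

lemma difffun_const[simp, intro]: "difffun (\<lambda>z. k)"
  by (rule difffunI[of "{}"]) (auto simp: smooth_const depends_only_on_const)

lemma difffun_coord[simp, intro]: "difffun (\<lambda>z. z d)"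
  by (rule difffunI[of "{d}"]) (auto simp: smooth_coord depends_only_on_coord)

lemma difffun_binop:
  assumes "difffun f" "difffun g"
    and "\<And>S. depends_only_on S f \<Longrightarrow> depends_only_on S g \<Longrightarrow> depends_only_on S h"
    and "smooth f \<Longrightarrow> smooth g \<Longrightarrow> smooth h"
  shows "difffun h"
proof -
  obtain S1 S2 where "finite S1" "depends_only_on S1 f" "finite S2" "depends_only_on S2 g"
    using assms(1,2) difffun_finite_dependence by metis
  then have "depends_only_on (S1 \<union> S2) f" "depends_only_on (S1 \<union> S2) g"
    using depends_only_on_mono by blast+
  then show ?thesis using assms \<open>finite S1\<close> \<open>finite S2\<close> difffun_smooth
    by (intro difffunI[of "S1 \<union> S2"]) auto
qed

lemma difffun_add[intro]: "difffun f \<Longrightarrow> difffun g \<Longrightarrow> difffun (\<lambda>z. f z + g z)"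
  by (rule difffun_binop[of f g]) (auto intro: depends_only_on_add smooth_add)

lemma difffun_mult[intro]: "difffun f \<Longrightarrow> difffun g \<Longrightarrow> difffun (\<lambda>z. f z * g z)"
  by (rule difffun_binop[of f g]) (auto intro: depends_only_on_mult smooth_mult)

lemma difffun_diff[intro]: "difffun f \<Longrightarrow> difffun g \<Longrightarrow> difffun (\<lambda>z. f z - g z)"
  by (rule difffun_binop[of f g]) (auto intro: depends_only_on_diff smooth_diff)

lemma difffun_cmult[intro]: "difffun f \<Longrightarrow> difffun (\<lambda>z. k * f z)"
  using difffun_mult[OF difffun_const] by blast

lemma difffun_pd[intro]: "difffun f \<Longrightarrow> difffun (pd c f)"
  by (rule difffun_binop[of f f]) (auto intro: depends_only_on_pd smooth_pd)

lemma difffun_sum[intro]: "(\<And>a. a \<in> A \<Longrightarrow> difffun (F a)) \<Longrightarrow> difffun (\<lambda>z. \<Sum>a\<in>A. F a z)"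
  by (induction A rule: infinite_finite_induct) auto

lemma difffun_prod: "(\<And>a. a \<in> A \<Longrightarrow> difffun (F a)) \<Longrightarrow> difffun (\<lambda>z. \<Prod>a\<in>A. F a z)"
  by (induction A rule: infinite_finite_induct) auto

section \<open>Multi-indices\<close>

definition inc :: "'i \<Rightarrow> ('i \<Rightarrow> nat) \<Rightarrow> ('i \<Rightarrow> nat)" where
  "inc i J = J(i := Suc (J i))"

definition dec :: "'i \<Rightarrow> ('i \<Rightarrow> nat) \<Rightarrow> ('i \<Rightarrow> nat)" where
  "dec i J = J(i := J i - 1)"

lemma dec_inc[simp]: "dec i (inc i J) = J"
  unfolding dec_def inc_def by auto

lemma inc_dec[simp]: "0 < J i \<Longrightarrow> inc i (dec i J) = J"
  unfolding dec_def inc_def by auto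

lemma inc_inj: "inc i J = inc i K \<longleftrightarrow> J = K"
  by (metis dec_inc)

lemma inc_pos[simp]: "0 < inc i J i"
  unfolding inc_def by simp

lemma inc_neq_0[simp]: "inc i J i \<noteq> 0"
  unfolding inc_def by simp

lemma inc_eq_iff: "K = inc i J \<longleftrightarrow> 0 < K i \<and> J = dec i K"
  by (metis dec_inc inc_dec inc_pos)

lemma inc_comm: "inc i (inc j J) = inc j (inc i J)"
  unfolding inc_def by (auto simp: fun_eq_iff)

lemma dec_comm: "dec i (dec j J) = dec j (dec i J)"
  unfolding dec_def by (auto simp: fun_eq_iff)

lemma dec_other: "i \<noteq> j \<Longrightarrow> dec j J i = J i"
  unfolding dec_def by simp

lemma mlen_inc: "mlen (inc i (J::'i::finite \<Rightarrow> nat)) = Suc (mlen J)"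
proof -
  have "mlen (inc i J) = (\<Sum>j\<in>UNIV. J j + (if j = i then 1 else 0))"
    unfolding mlen_def inc_def by (intro sum.cong) auto
  also have "\<dots> = mlen J + 1" unfolding mlen_def by (simp add: sum.distrib)
  finally show ?thesis by simp
qed

lemma mlen_dec: "0 < J i \<Longrightarrow> mlen (J::'i::finite \<Rightarrow> nat) = Suc (mlen (dec i J))"
  using mlen_inc[of i "dec i J"] by simp

lemma mlen_eq_0_iff: "mlen (J::'i::finite \<Rightarrow> nat) = 0 \<longleftrightarrow> J = (\<lambda>i. 0)"
proof
  assume "mlen J = 0"
  then show "J = (\<lambda>i. 0)" unfolding mlen_def by (simp add: sum_eq_0_iff fun_eq_iff)
qed (simp add: mlen_def)

lemma mlen_eq_Suc_imp_pos: "mlen (J::'i::finite \<Rightarrow> nat) = Suc k \<Longrightarrow> \<exists>i. 0 < J i"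
  using mlen_eq_0_iff[of J] by auto

lemma multi_index_induct:
  fixes P :: "('i::finite \<Rightarrow> nat) \<Rightarrow> bool"
  assumes "P (\<lambda>i. 0)" "\<And>J i. P J \<Longrightarrow> P (inc i J)"
  shows "P J"
proof (induction "mlen J" arbitrary: J)
  case 0
  then have "J = (\<lambda>i. 0)" using mlen_eq_0_iff by metis
  then show ?case using assms(1) by simp
next
  case (Suc k)
  obtain i where i: "0 < J i" using mlen_eq_Suc_imp_pos Suc.hyps(2)[symmetric] by blast
  have "Suc k = Suc (mlen (dec i J))" using Suc.hyps(2) mlen_dec[of J i, OF i] by simp
  then have "P (dec i J)" using Suc.hyps(1) by simp
  then have "P (inc i (dec i J))" by (rule assms(2))
  then show ?case using i by simp
qed

definition indices_le :: "nat \<Rightarrow> ('i::finite \<Rightarrow> nat) set" where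
  "indices_le N = {J. mlen J \<le> N}"

lemma finite_indices_le[simp, intro]: "finite (indices_le N :: ('i::finite \<Rightarrow> nat) set)"
proof (rule finite_subset)
  have le: "J i \<le> mlen J" for J :: "'i \<Rightarrow> nat" and i
    unfolding mlen_def by (rule member_le_sum) auto
  show "indices_le N \<subseteq> PiE (UNIV :: 'i set) (\<lambda>_. {..N})"
  proof
    fix J :: "'i \<Rightarrow> nat" assume "J \<in> indices_le N"
    then have "mlen J \<le> N" unfolding indices_le_def by simp
    then show "J \<in> PiE UNIV (\<lambda>_. {..N})" using le[of J] by (simp add: PiE_iff) (metis order_trans)
  qed
qed (auto intro: finite_PiE)

lemma indices_le_mono: "N \<le> M \<Longrightarrow> indices_le N \<subseteq> indices_le M"
  unfolding indices_le_def by auto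

lemma zero_in_indices_le[simp]: "(\<lambda>i. 0) \<in> indices_le N"
  unfolding indices_le_def mlen_def by simp

lemma inc_indices_le: "inc j ` indices_le N \<subseteq> indices_le (Suc N)"
  unfolding indices_le_def by (auto simp: mlen_inc)

lemma sum_delta_inc:
  "(\<Sum>J\<in>indices_le N. if K = inc i J then F J else 0)
     = (if 0 < K i \<and> dec i K \<in> indices_le N then F (dec i K) else (0::real))"
proof -
  have "(\<Sum>J\<in>indices_le N. if K = inc i J then F J else 0)
      = (\<Sum>J\<in>indices_le N. if J = dec i K then (if 0 < K i then F J else 0) else 0)"
    by (intro sum.cong) (auto simp: inc_eq_iff)
  then show ?thesis by (auto simp: sum.delta[OF finite_indices_le])
qed

lemma sum_shift_inc:
  fixes F :: "('i \<Rightarrow> nat) \<Rightarrow> ('i \<Rightarrow> nat) \<Rightarrow> real"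
  assumes "inc j ` A \<subseteq> B" "finite B"
    and "\<And>K. K \<in> B \<Longrightarrow> 0 < K j \<Longrightarrow> dec j K \<notin> A \<Longrightarrow> F K (dec j K) = 0"
  shows "(\<Sum>K\<in>B. if 0 < K j then F K (dec j K) else 0) = (\<Sum>M\<in>A. F (inc j M) M)"
proof -
  have "(\<Sum>M\<in>A. F (inc j M) M) = (\<Sum>K\<in>inc j ` A. F K (dec j K))"
    by (subst sum.reindex) (auto simp: inj_on_def inc_inj)
  also have "\<dots> = (\<Sum>K\<in>B. if K \<in> inc j ` A then F K (dec j K) else 0)"
    using assms(1,2) by (simp add: sum.inter_restrict[symmetric] Int_absorb1)
  also have "\<dots> = (\<Sum>K\<in>B. if 0 < K j then F K (dec j K) else 0)"
  proof (intro sum.cong refl)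
    fix K assume "K \<in> B"
    show "(if K \<in> inc j ` A then F K (dec j K) else 0) = (if 0 < K j then F K (dec j K) else 0)"
    proof (cases "K \<in> inc j ` A")
      case True then show ?thesis by auto
    next
      case False
      show ?thesis
      proof (cases "0 < K j")
        case True
        then have "dec j K \<notin> A" using False by (metis image_eqI inc_dec)
        then show ?thesis using assms(3) \<open>K \<in> B\<close> True False by simp
      qed (use False in simp)
    qed
  qed
  finally show ?thesis by simp
qed

definition order_le :: "nat \<Rightarrow> ('i::finite) dfun \<Rightarrow> bool" where
  "order_le N f \<longleftrightarrow> (\<forall>J. N < mlen J \<longrightarrow> pd (U J) f = (\<lambda>z. 0))"

lemma order_leD: "order_le N f \<Longrightarrow> N < mlen J \<Longrightarrow> pd (U J) f = (\<lambda>z. 0)"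
  unfolding order_le_def by blast

lemma order_leD': "order_le N f \<Longrightarrow> J \<notin> indices_le N \<Longrightarrow> pd (U J) f z = 0"
  unfolding order_le_def indices_le_def by auto

lemma order_le_mono: "order_le N f \<Longrightarrow> N \<le> M \<Longrightarrow> order_le M f"
  unfolding order_le_def by auto

lemma dsupp_frechet_op_subset: "order_le N f \<Longrightarrow> dsupp (frechet_op f) \<subseteq> indices_le N"
  unfolding order_le_def indices_le_def dsupp_def frechet_op_def by (auto simp: not_le)

lemma difffun_order_le:
  assumes "difffun (f::'i::finite dfun)"
  obtains N where "order_le N f"
proof -
  obtain S where S: "finite S" "depends_only_on S f" using assms difffun_finite_dependence by blast
  have fin: "finite (U -` S)" using S(1) by (rule finite_vimageI) (simp add: inj_def)
  have "order_le (Max (mlen ` (U -` S))) f" unfolding order_le_def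
  proof (intro allI impI)
    fix J :: "'i \<Rightarrow> nat" assume "Max (mlen ` (U -` S)) < mlen J"
    then have "U J \<notin> S" using fin by (metis Max_ge finite_imageI image_eqI leD vimageI)
    then show "pd (U J) f = (\<lambda>z. 0)" using pd_eq_0_if_depends_only_on[OF S(2)] by blast
  qed
  then show ?thesis by (rule that)
qed

lemma difffun_order_le2:
  assumes "difffun f" "difffun g"
  obtains N where "order_le N f" "order_le N g"
proof -
  obtain M where M: "order_le M f" using difffun_order_le[OF assms(1)] .
  obtain K where K: "order_le K g" using difffun_order_le[OF assms(2)] .
  show thesis using that order_le_mono[OF M, of "max M K"] order_le_mono[OF K, of "max M K"] by simp
qed

lemma order_le_const: "order_le N (\<lambda>z. k)"
  unfolding order_le_def by (simp add: pd_const)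

lemma order_le_coord_U: "mlen K \<le> N \<Longrightarrow> order_le N (\<lambda>z. z (U K))"
  unfolding order_le_def by (auto simp: pd_coord)

lemma order_le_add: "order_le N f \<Longrightarrow> order_le N g \<Longrightarrow> line_differentiable f \<Longrightarrow> line_differentiable g \<Longrightarrow>
    order_le N (\<lambda>z. f z + g z)"
  unfolding order_le_def by (simp add: pd_add)

lemma order_le_mult: "order_le N f \<Longrightarrow> order_le N g \<Longrightarrow> line_differentiable f \<Longrightarrow> line_differentiable g \<Longrightarrow>
    order_le N (\<lambda>z. f z * g z)"
  unfolding order_le_def by (simp add: pd_mult)

lemma order_le_pd: "order_le N f \<Longrightarrow> smooth f \<Longrightarrow> order_le N (pd c f)"
  unfolding order_le_def by (simp add: pd_commute pd_const)

section \<open>Total derivatives\<close>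

lemma Dtot_expand:
  assumes "order_le N f"
  shows "Dtot i f = (\<lambda>z. pd (X i) f z + (\<Sum>J\<in>indices_le N. z (U (inc i J)) * pd (U J) f z))"
proof
  fix z
  have "(\<Sum>J\<in>dsupp (frechet_op f). z (U (inc i J)) * pd (U J) f z)
      = (\<Sum>J\<in>indices_le N. z (U (inc i J)) * pd (U J) f z)"
    by (rule sum.mono_neutral_left)
       (use dsupp_frechet_op_subset[OF assms] in \<open>auto simp: dsupp_def frechet_op_def\<close>)
  then show "Dtot i f z = pd (X i) f z + (\<Sum>J\<in>indices_le N. z (U (inc i J)) * pd (U J) f z)"
    unfolding Dtot_def by (simp add: dsupp_def frechet_op_def inc_def)
qed

lemma difffun_Dtot[intro]:
  fixes f :: "('i::finite) dfun"
  assumes "difffun f"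
  shows "difffun (Dtot i f)"
proof -
  obtain N where "order_le N f" using difffun_order_le assms by blast
  then show ?thesis using assms
    by (auto simp: Dtot_expand intro!: difffun_add difffun_sum difffun_mult difffun_pd)
qed

lemma Dtot_const[simp]: "Dtot i (\<lambda>z. k) = (\<lambda>z. 0)"
  by (simp add: Dtot_def pd_const)

lemma Dtot_add:
  fixes f g :: "('i::finite) dfun"
  assumes "difffun f" "difffun g"
  shows "Dtot i (\<lambda>z. f z + g z) = (\<lambda>z. Dtot i f z + Dtot i g z)"
proof -
  obtain N where N: "order_le N f" "order_le N g" using difffun_order_le2 assms by blast
  have l: "line_differentiable f" "line_differentiable g" using assms difffun_line_differentiable by auto
  have "order_le N (\<lambda>z. f z + g z)" using N l by (rule order_le_add)
  then show ?thesis using N l by (simp add: Dtot_expand pd_add algebra_simps sum.distrib)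
qed

lemma Dtot_mult:
  fixes f g :: "('i::finite) dfun"
  assumes "difffun f" "difffun g"
  shows "Dtot i (\<lambda>z. f z * g z) = (\<lambda>z. Dtot i f z * g z + f z * Dtot i g z)"
proof -
  obtain N where N: "order_le N f" "order_le N g" using difffun_order_le2 assms by blast
  have l: "line_differentiable f" "line_differentiable g" using assms difffun_line_differentiable by auto
  have "order_le N (\<lambda>z. f z * g z)" using N l by (rule order_le_mult)
  then show ?thesis using N l
    by (simp add: Dtot_expand pd_mult algebra_simps sum.distrib sum_distrib_left sum_distrib_right)
qed

lemma Dtot_cmult: "difffun f \<Longrightarrow> Dtot i (\<lambda>z. k * f z) = (\<lambda>z. k * Dtot i (f::('i::finite) dfun) z)"
  using Dtot_mult[OF difffun_const, of f i k] by (simp add: Dtot_const)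

lemma Dtot_diff:
  fixes f g :: "('i::finite) dfun"
  assumes "difffun f" "difffun g"
  shows "Dtot i (\<lambda>z. f z - g z) = (\<lambda>z. Dtot i f z - Dtot i g z)"
  using Dtot_add[OF assms(1) difffun_cmult[OF assms(2)], of i "-1"] Dtot_cmult[OF assms(2), of i "-1"]
  by simp

lemma Dtot_sum:
  fixes F :: "'a \<Rightarrow> ('i::finite) dfun"
  assumes "\<And>a. a \<in> A \<Longrightarrow> difffun (F a)"
  shows "Dtot i (\<lambda>z. \<Sum>a\<in>A. F a z) = (\<lambda>z. \<Sum>a\<in>A. Dtot i (F a) z)"
  using assms
proof (induction A rule: infinite_finite_induct)
  case (insert x A)
  then show ?case by (simp add: Dtot_add difffun_sum)
qed (auto simp: Dtot_const)

lemma Dtot_coord_U: "Dtot i (\<lambda>z. z (U (K::'i::finite\<Rightarrow>nat))) = (\<lambda>z. z (U (inc i K)))"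
proof
  fix z
  have "(\<Sum>J\<in>indices_le (mlen K). z (U (inc i J)) * pd (U J) (\<lambda>z. z (U K)) z)
      = (\<Sum>J\<in>indices_le (mlen K). if J = K then z (U (inc i J)) else 0)"
    by (intro sum.cong) (auto simp: pd_coord)
  also have "\<dots> = z (U (inc i K))"
    using sum.delta[OF finite_indices_le[of "mlen K"], of K "\<lambda>J. z (U (inc i J))"]
    by (auto simp: indices_le_def)
  finally show "Dtot i (\<lambda>z. z (U K)) z = z (U (inc i K))"
    by (simp add: Dtot_expand[OF order_le_coord_U[OF order_refl]] pd_coord)
qed

lemma pd_Dtot_expand:
  fixes h :: "('i::finite) dfun"
  assumes h: "difffun h" and N: "order_le N h"
  shows "pd c (Dtot i h) = (\<lambda>z. pd c (pd (X i) h) z + (\<Sum>J\<in>indices_le N.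
     pd c (\<lambda>z. z (U (inc i J))) z * pd (U J) h z + z (U (inc i J)) * pd c (pd (U J) h) z))"
proof -
  have l: "line_differentiable (\<lambda>z. z (U (inc i J)) * pd (U J) h z)" for J
    using h by (intro line_differentiable_mult line_differentiable_coord difffun_line_differentiable difffun_pd)
  have "pd c (Dtot i h) = pd c (\<lambda>z. pd (X i) h z + (\<Sum>J\<in>indices_le N. z (U (inc i J)) * pd (U J) h z))"
    by (simp add: Dtot_expand[OF N])
  also have "\<dots> = (\<lambda>z. pd c (pd (X i) h) z + pd c (\<lambda>z. \<Sum>J\<in>indices_le N. z (U (inc i J)) * pd (U J) h z) z)"
    using h by (intro pd_add line_differentiable_sum l difffun_line_differentiable difffun_pd)
  also have "\<dots> = (\<lambda>z. pd c (pd (X i) h) z + (\<Sum>J\<in>indices_le N. pd c (\<lambda>z. z (U (inc i J)) * pd (U J) h z) z))"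
    by (simp add: pd_sum[OF l])
  also have "\<dots> = (\<lambda>z. pd c (pd (X i) h) z + (\<Sum>J\<in>indices_le N.
     pd c (\<lambda>z. z (U (inc i J))) z * pd (U J) h z + z (U (inc i J)) * pd c (pd (U J) h) z))"
    using h by (simp add: pd_mult[OF line_differentiable_coord difffun_line_differentiable[OF difffun_pd[OF h]]])
  finally show ?thesis .
qed

lemma pd_X_Dtot:
  fixes h :: "('i::finite) dfun"
  assumes h: "difffun h"
  shows "pd (X j) (Dtot i h) = Dtot i (pd (X j) h)"
proof -
  obtain N where N: "order_le N h" using difffun_order_le h by blast
  have sh: "smooth h" using h difffun_smooth by blast
  show ?thesis
    by (simp add: pd_Dtot_expand[OF h N] Dtot_expand[OF order_le_pd[OF N sh]] pd_coord pd_commute[OF sh])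
qed

lemma pd_U_Dtot:
  fixes h :: "('i::finite) dfun"
  assumes h: "difffun h"
  shows "pd (U K) (Dtot i h) = (\<lambda>z. Dtot i (pd (U K) h) z + (if 0 < K i then pd (U (dec i K)) h z else 0))"
proof
  fix z
  obtain N where N: "order_le N h" using difffun_order_le h by blast
  have sh: "smooth h" using h difffun_smooth by blast
  have "(\<Sum>J\<in>indices_le N. pd (U K) (\<lambda>z. z (U (inc i J))) z * pd (U J) h z)
      = (\<Sum>J\<in>indices_le N. if K = inc i J then pd (U J) h z else 0)"
    by (intro sum.cong) (auto simp: pd_coord)
  also have "\<dots> = (if 0 < K i then pd (U (dec i K)) h z else 0)"
    using order_leD'[OF N, of "dec i K" z] by (simp add: sum_delta_inc)
  finally show "pd (U K) (Dtot i h) z = Dtot i (pd (U K) h) z + (if 0 < K i then pd (U (dec i K)) h z else 0)"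
    by (simp add: pd_Dtot_expand[OF h N] Dtot_expand[OF order_le_pd[OF N sh]] sum.distrib
        pd_commute[OF sh])
qed

lemma order_le_Dtot:
  fixes h :: "('i::finite) dfun"
  assumes h: "difffun h" and N: "order_le N h"
  shows "order_le (Suc N) (Dtot i h)"
  unfolding order_le_def
proof (intro allI impI)
  fix K :: "'i \<Rightarrow> nat" assume K: "Suc N < mlen K"
  have "pd (U K) h = (\<lambda>z. 0)" using order_leD[OF N] K by simp
  moreover have "0 < K i \<Longrightarrow> pd (U (dec i K)) h = (\<lambda>z. 0)"
    using order_leD[OF N, of "dec i K"] K mlen_dec[of K i] by simp
  ultimately show "pd (U K) (Dtot i h) = (\<lambda>z. 0)"
    by (cases "0 < K i") (simp_all add: pd_U_Dtot[OF h])
qed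

text \<open>The expansion of \<open>D\<^sub>i D\<^sub>j h\<close> below is symmetric in \<open>i, j\<close> by \<open>pd_commute\<close>.\<close>

definition Dtot2_expansion :: "('i::finite) dfun \<Rightarrow> nat \<Rightarrow> 'i \<Rightarrow> 'i \<Rightarrow> 'i jet \<Rightarrow> real" where
  "Dtot2_expansion h N i j z = pd (X j) (pd (X i) h) z
    + ((\<Sum>L\<in>indices_le (Suc N). z (U (inc j L)) * pd (X i) (pd (U L) h) z) + (\<Sum>K\<in>indices_le (Suc N). z (U (inc i K)) * pd (X j) (pd (U K) h) z))
    + (\<Sum>K\<in>indices_le (Suc N). \<Sum>L\<in>indices_le (Suc N). z (U (inc i K)) * z (U (inc j L)) * pd (U L) (pd (U K) h) z)
    + (\<Sum>M\<in>indices_le N. z (U (inc i (inc j M))) * pd (U M) h z)"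

lemma Dtot2_expansion_sym:
  assumes "smooth h"
  shows "Dtot2_expansion h N i j z = Dtot2_expansion h N j i z"
proof -
  have a: "pd (X j) (pd (X i) h) z = pd (X i) (pd (X j) h) z" using pd_commute[OF assms] by simp
  have b: "(\<Sum>K\<in>indices_le (Suc N). \<Sum>L\<in>indices_le (Suc N). z (U (inc i K)) * z (U (inc j L)) * pd (U L) (pd (U K) h) z)
     = (\<Sum>K\<in>indices_le (Suc N). \<Sum>L\<in>indices_le (Suc N). z (U (inc j K)) * z (U (inc i L)) * pd (U L) (pd (U K) h) z)"
    by (subst sum.swap) (simp add: pd_commute[OF assms] mult_ac)
  have c: "(\<Sum>M\<in>indices_le N. z (U (inc i (inc j M))) * pd (U M) h z) = (\<Sum>M\<in>indices_le N. z (U (inc j (inc i M))) * pd (U M) h z)"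
    by (simp add: inc_comm)
  show ?thesis unfolding Dtot2_expansion_def a b c by (simp add: add_ac)
qed

lemma Dtot_Dtot_eq_expansion:
  fixes h :: "('i::finite) dfun"
  assumes h: "difffun h" and N: "order_le N h"
  shows "Dtot i (Dtot j h) z = Dtot2_expansion h N i j z"
proof -
  have sh: "smooth h" using h difffun_smooth by blast
  have N1: "order_le (Suc N) (Dtot j h)" using order_le_Dtot[OF h N] .
  have NS: "order_le (Suc N) h" using N order_le_mono by fastforce
  have NX: "order_le (Suc N) (pd (X i) h)" using order_le_pd[OF NS sh] .
  have NU: "order_le (Suc N) (pd (U K) h)" for K using order_le_pd[OF NS sh] .
  let ?A = "indices_le (Suc N)"
  have "Dtot i (Dtot j h) z = pd (X i) (Dtot j h) z + (\<Sum>K\<in>?A. z (U (inc i K)) * pd (U K) (Dtot j h) z)"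
    by (simp add: Dtot_expand[OF N1])
  also have "\<dots> = Dtot j (pd (X i) h) z + (\<Sum>K\<in>?A. z (U (inc i K)) * (Dtot j (pd (U K) h) z + (if 0 < K j then pd (U (dec j K)) h z else 0)))"
    by (simp add: pd_X_Dtot[OF h] pd_U_Dtot[OF h])
  also have "\<dots> = (pd (X j) (pd (X i) h) z + (\<Sum>L\<in>?A. z (U (inc j L)) * pd (U L) (pd (X i) h) z))
      + (\<Sum>K\<in>?A. z (U (inc i K)) * ((pd (X j) (pd (U K) h) z + (\<Sum>L\<in>?A. z (U (inc j L)) * pd (U L) (pd (U K) h) z))
           + (if 0 < K j then pd (U (dec j K)) h z else 0)))"
    by (simp add: Dtot_expand[OF NX] Dtot_expand[OF NU])
  also have "\<dots> = (pd (X j) (pd (X i) h) z + (\<Sum>L\<in>?A. z (U (inc j L)) * pd (X i) (pd (U L) h) z))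
      + ((\<Sum>K\<in>?A. z (U (inc i K)) * pd (X j) (pd (U K) h) z) + (\<Sum>K\<in>?A. \<Sum>L\<in>?A. z (U (inc i K)) * z (U (inc j L)) * pd (U L) (pd (U K) h) z)
           + (\<Sum>K\<in>?A. if 0 < K j then z (U (inc i K)) * pd (U (dec j K)) h z else 0))"
  proof -
    have e: "z (U (inc i K)) * ((pd (X j) (pd (U K) h) z + (\<Sum>L\<in>?A. z (U (inc j L)) * pd (U L) (pd (U K) h) z))
           + (if 0 < K j then pd (U (dec j K)) h z else 0))
        = z (U (inc i K)) * pd (X j) (pd (U K) h) z + (\<Sum>L\<in>?A. z (U (inc i K)) * z (U (inc j L)) * pd (U L) (pd (U K) h) z)
          + (if 0 < K j then z (U (inc i K)) * pd (U (dec j K)) h z else 0)" for K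
      by (simp add: distrib_left sum_distrib_left mult_ac)
    have f: "(\<Sum>L\<in>?A. z (U (inc j L)) * pd (U L) (pd (X i) h) z) = (\<Sum>L\<in>?A. z (U (inc j L)) * pd (X i) (pd (U L) h) z)"
      using pd_commute[OF sh] by metis
    show ?thesis unfolding e f sum.distrib by (simp add: add_ac)
  qed
  also have "(\<Sum>K\<in>?A. if 0 < K j then z (U (inc i K)) * pd (U (dec j K)) h z else 0)
      = (\<Sum>M\<in>indices_le N. z (U (inc i (inc j M))) * pd (U M) h z)"
    by (rule sum_shift_inc[OF inc_indices_le finite_indices_le]) (use order_leD'[OF N] in simp)
  finally show ?thesis unfolding Dtot2_expansion_def by (simp add: add_ac)
qed

lemma Dtot_comm:
  fixes h :: "('i::finite) dfun"
  assumes h: "difffun h"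
  shows "Dtot i (Dtot j h) = Dtot j (Dtot i h)"
proof
  fix z
  obtain N where N: "order_le N h" using difffun_order_le h by blast
  show "Dtot i (Dtot j h) z = Dtot j (Dtot i h) z"
    using Dtot_Dtot_eq_expansion[OF h N] Dtot2_expansion_sym[OF difffun_smooth[OF h]] by metis
qed

lemma difffun_DJn: "difffun f \<Longrightarrow> difffun (DJn k J (f::('i::finite) dfun))"
  by (induction k arbitrary: J) (auto simp: Let_def)

text \<open>\<^const>\<open>DJn\<close> peels off the derivative in the direction \<open>SOME i. 0 < J i\<close>; by
\<open>Dtot_comm\<close> any other direction with \<open>0 < J i\<close> gives the same result.\<close>

lemma DJn_Suc_any:
  fixes f :: "('i::finite) dfun"
  assumes f: "difffun f"
  shows "mlen J = Suc m \<Longrightarrow> 0 < J i \<Longrightarrow> DJn (Suc m) J f = Dtot i (DJn m (dec i J) f)"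
proof (induction m arbitrary: J i rule: less_induct)
  case (less m)
  define i0 where "i0 = (SOME i. 0 < J i)"
  have i0: "0 < J i0" unfolding i0_def using less.prems(2) by (rule someI)
  have unfold: "DJn (Suc m) J f = Dtot i0 (DJn m (dec i0 J) f)"
    by (simp add: i0_def Let_def dec_def)
  show ?case
  proof (cases "i = i0")
    case False
    have pos: "0 < dec i0 J i" "0 < dec i J i0"
      using less.prems(2) i0 False by (simp_all add: dec_other)
    have len: "mlen (dec i0 J) = m" "mlen (dec i J) = m"
      using less.prems mlen_dec[of J i0, OF i0] mlen_dec[of J i] by simp_all
    then obtain m' where m: "m = Suc m'"
      using pos(1) mlen_dec[of "dec i0 J" i] by (cases m) auto
    have "DJn (Suc m) J f = Dtot i0 (Dtot i (DJn m' (dec i (dec i0 J)) f))"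
      using unfold less.IH[of m' "dec i0 J" i] m len pos by simp
    also have "\<dots> = Dtot i (Dtot i0 (DJn m' (dec i0 (dec i J)) f))"
      using Dtot_comm[OF difffun_DJn[OF f]] dec_comm by metis
    also have "\<dots> = Dtot i (DJn m (dec i J) f)"
      using less.IH[of m' "dec i J" i0] m len pos by simp
    finally show ?thesis .
  qed (simp only: unfold)
qed

lemma difffun_DJ[intro]: "difffun f \<Longrightarrow> difffun (DJ J (f::('i::finite) dfun))"
  unfolding DJ_def by (rule difffun_DJn)

lemma DJ_0[simp]: "DJ (\<lambda>i. 0) f = f"
  unfolding DJ_def by (simp add: mlen_def)

lemma DJ_inc:
  fixes f :: "('i::finite) dfun"
  assumes "difffun f"
  shows "DJ (inc i J) f = Dtot i (DJ J f)"
  unfolding DJ_def mlen_inc using DJn_Suc_any[OF assms, of "inc i J" "mlen J" i] by (simp add: mlen_inc)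

lemma DJ_Dtot:
  fixes f :: "('i::finite) dfun"
  assumes "difffun f"
  shows "DJ J (Dtot i f) = Dtot i (DJ J f)"
proof (induction J rule: multi_index_induct)
  case (2 J i')
  have "DJ (inc i' J) (Dtot i f) = Dtot i' (Dtot i (DJ J f))"
    using DJ_inc[OF difffun_Dtot[OF assms], of i' J i] 2 by simp
  also have "\<dots> = Dtot i (Dtot i' (DJ J f))" by (rule Dtot_comm[OF difffun_DJ[OF assms]])
  finally show ?case using DJ_inc[OF assms] by simp
qed simp

lemma DJ_zero[simp]: "DJ (J::'i::finite \<Rightarrow> nat) (\<lambda>z. 0) = (\<lambda>z. 0)"
  by (induction J rule: multi_index_induct) (simp_all add: DJ_inc)

lemma DJ_inc_inner: "difffun f \<Longrightarrow> DJ (inc i J) (f::('i::finite) dfun) = DJ J (Dtot i f)"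
  by (simp add: DJ_inc DJ_Dtot)

lemma DJ_add:
  fixes f g :: "('i::finite) dfun"
  assumes "difffun f" "difffun g"
  shows "DJ J (\<lambda>z. f z + g z) = (\<lambda>z. DJ J f z + DJ J g z)"
proof (induction J rule: multi_index_induct)
  case (2 J i)
  have "DJ (inc i J) (\<lambda>z. f z + g z) = Dtot i (\<lambda>z. DJ J f z + DJ J g z)"
    using DJ_inc[OF difffun_add[OF assms]] 2 by simp
  also have "\<dots> = (\<lambda>z. Dtot i (DJ J f) z + Dtot i (DJ J g) z)"
    using assms by (intro Dtot_add difffun_DJ)
  finally show ?case using assms by (simp add: DJ_inc)
qed simp

lemma DJ_cmult:
  fixes f :: "('i::finite) dfun"
  assumes "difffun f"
  shows "DJ J (\<lambda>z. k * f z) = (\<lambda>z. k * DJ J f z)"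
proof (induction J rule: multi_index_induct)
  case (2 J i)
  have "DJ (inc i J) (\<lambda>z. k * f z) = Dtot i (\<lambda>z. k * DJ J f z)"
    using DJ_inc[OF difffun_cmult[OF assms]] 2 by simp
  also have "\<dots> = (\<lambda>z. k * Dtot i (DJ J f) z)" using assms by (intro Dtot_cmult difffun_DJ)
  finally show ?case using assms by (simp add: DJ_inc)
qed simp

lemma DJ_diff:
  fixes f g :: "('i::finite) dfun"
  assumes "difffun f" "difffun g"
  shows "DJ J (\<lambda>z. f z - g z) = (\<lambda>z. DJ J f z - DJ J g z)"
  using DJ_add[OF assms(1) difffun_cmult[OF assms(2)], of J "-1"] DJ_cmult[OF assms(2), of J "-1"]
  by simp

section \<open>Linear operators and the Euler operator\<close>

lemma applyop_expand:
  fixes A :: "('i::finite) dop"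
  assumes "finite B" "dsupp A \<subseteq> B"
  shows "applyop A F = (\<lambda>z. \<Sum>J\<in>B. A J z * DJ J F z)"
  unfolding applyop_def by (intro ext sum.mono_neutral_left) (use assms in \<open>auto simp: dsupp_def\<close>)

lemma adjapply_expand:
  fixes A :: "('i::finite) dop"
  assumes "finite B" "dsupp A \<subseteq> B"
  shows "adjapply A C = (\<lambda>z. \<Sum>J\<in>B. (-1::real) ^ mlen J * DJ J (\<lambda>w. A J w * C w) z)"
  unfolding adjapply_def by (intro ext sum.mono_neutral_left) (use assms in \<open>auto simp: dsupp_def\<close>)

lemma frechet_expand:
  fixes f :: "('i::finite) dfun"
  assumes "order_le N f"
  shows "frechet f P = (\<lambda>z. \<Sum>J\<in>indices_le N. pd (U J) f z * DJ J P z)"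
  unfolding frechet_def
  by (subst applyop_expand[OF finite_indices_le dsupp_frechet_op_subset[OF assms]]) (simp add: frechet_op_def)

lemma euler_expand:
  fixes f :: "('i::finite) dfun"
  assumes "order_le N f"
  shows "euler f = (\<lambda>z. \<Sum>J\<in>indices_le N. (-1::real) ^ mlen J * DJ J (pd (U J) f) z)"
  unfolding euler_def
  by (subst adjapply_expand[OF finite_indices_le dsupp_frechet_op_subset[OF assms]]) (simp add: frechet_op_def)

lemma difffun_applyop[intro]:
  fixes A :: "('i::finite) dop"
  assumes "is_dop A" "difffun F"
  shows "difffun (applyop A F)"
  using assms unfolding applyop_def is_dop_def by (intro difffun_sum difffun_mult difffun_DJ) auto

lemma difffun_adjapply[intro]:
  fixes A :: "('i::finite) dop"
  assumes "is_dop A" "difffun C"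
  shows "difffun (adjapply A C)"
  using assms unfolding adjapply_def is_dop_def by (intro difffun_sum difffun_mult difffun_DJ) auto

lemma is_dop_frechet_op[intro]:
  assumes "difffun (f::('i::finite) dfun)"
  shows "is_dop (frechet_op f)"
proof -
  obtain N where "order_le N f" using difffun_order_le assms by blast
  then have "finite (dsupp (frechet_op f))"
    using dsupp_frechet_op_subset finite_subset by blast
  then show ?thesis unfolding is_dop_def using assms by (simp add: frechet_op_def difffun_pd)
qed

lemma difffun_frechet[intro]: "difffun (f::('i::finite) dfun) \<Longrightarrow> difffun P \<Longrightarrow> difffun (frechet f P)"
  unfolding frechet_def by (intro difffun_applyop is_dop_frechet_op)

lemma difffun_euler[intro]: "difffun (f::('i::finite) dfun) \<Longrightarrow> difffun (euler f)"
  unfolding euler_def by (intro difffun_adjapply is_dop_frechet_op difffun_const)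

lemma euler_add:
  fixes f g :: "('i::finite) dfun"
  assumes "difffun f" "difffun g"
  shows "euler (\<lambda>z. f z + g z) = (\<lambda>z. euler f z + euler g z)"
proof
  fix z
  obtain N where N: "order_le N f" "order_le N g" using difffun_order_le2 assms by blast
  have l: "line_differentiable f" "line_differentiable g" using assms difffun_line_differentiable by auto
  have N': "order_le N (\<lambda>z. f z + g z)" using N l by (rule order_le_add)
  have "euler (\<lambda>z. f z + g z) z
      = (\<Sum>J\<in>indices_le N. (-1::real) ^ mlen J * DJ J (\<lambda>z. pd (U J) f z + pd (U J) g z) z)"
    by (simp add: euler_expand[OF N'] pd_add[OF l])
  also have "\<dots> = (\<Sum>J\<in>indices_le N. (-1::real) ^ mlen J * DJ J (pd (U J) f) z
      + (-1::real) ^ mlen J * DJ J (pd (U J) g) z)"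
    using assms by (simp add: DJ_add difffun_pd distrib_left)
  finally show "euler (\<lambda>z. f z + g z) z = euler f z + euler g z"
    by (simp add: euler_expand[OF N(1)] euler_expand[OF N(2)] sum.distrib)
qed

lemma euler_cmult:
  fixes f :: "('i::finite) dfun"
  assumes "difffun f"
  shows "euler (\<lambda>z. k * f z) = (\<lambda>z. k * euler f z)"
proof
  fix z
  obtain N where N: "order_le N f" using difffun_order_le assms by blast
  have l: "line_differentiable f" using assms difffun_line_differentiable by auto
  have N': "order_le N (\<lambda>z. k * f z)" using order_le_mult[OF order_le_const N line_differentiable_const l] .
  have "euler (\<lambda>z. k * f z) z = (\<Sum>J\<in>indices_le N. (-1::real) ^ mlen J * DJ J (\<lambda>z. k * pd (U J) f z) z)"
    by (simp add: euler_expand[OF N'] pd_cmult[OF l])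
  also have "\<dots> = (\<Sum>J\<in>indices_le N. k * ((-1::real) ^ mlen J * DJ J (pd (U J) f) z))"
    using assms by (simp add: DJ_cmult difffun_pd mult_ac)
  finally show "euler (\<lambda>z. k * f z) z = k * euler f z"
    by (simp add: euler_expand[OF N] sum_distrib_left)
qed

lemma euler_diff:
  fixes f g :: "('i::finite) dfun"
  assumes "difffun f" "difffun g"
  shows "euler (\<lambda>z. f z - g z) = (\<lambda>z. euler f z - euler g z)"
  using euler_add[OF assms(1) difffun_cmult[OF assms(2)], of "-1"] euler_cmult[OF assms(2), of "-1"]
  by simp

lemma euler_sum:
  fixes F :: "'a \<Rightarrow> ('i::finite) dfun"
  assumes "\<And>a. a \<in> A \<Longrightarrow> difffun (F a)"
  shows "euler (\<lambda>z. \<Sum>a\<in>A. F a z) = (\<lambda>z. \<Sum>a\<in>A. euler (F a) z)"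
  using assms
proof (induction A rule: infinite_finite_induct)
  case (insert x A)
  then show ?case by (simp add: euler_add difffun_sum)
qed (auto simp: euler_def adjapply_def dsupp_def frechet_op_def pd_const)

lemma euler_mult:
  fixes f g :: "('i::finite) dfun"
  assumes f: "difffun f" and g: "difffun g"
  shows "euler (\<lambda>z. f z * g z) = (\<lambda>z. adjapply (frechet_op f) g z + adjapply (frechet_op g) f z)"
proof
  fix z
  obtain N where N: "order_le N f" "order_le N g" using difffun_order_le2 assms by blast
  have l: "line_differentiable f" "line_differentiable g" using assms difffun_line_differentiable by auto
  have N': "order_le N (\<lambda>z. f z * g z)" using N l by (rule order_le_mult)
  have sf: "dsupp (frechet_op f) \<subseteq> indices_le N" "dsupp (frechet_op g) \<subseteq> indices_le N"
    using dsupp_frechet_op_subset N by auto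
  have "euler (\<lambda>z. f z * g z) z = (\<Sum>J\<in>indices_le N. (-1::real) ^ mlen J * DJ J (\<lambda>z. pd (U J) f z * g z + f z * pd (U J) g z) z)"
    by (simp add: euler_expand[OF N'] pd_mult[OF l])
  also have "\<dots> = (\<Sum>J\<in>indices_le N. (-1::real) ^ mlen J * DJ J (\<lambda>w. frechet_op f J w * g w) z
       + (-1::real) ^ mlen J * DJ J (\<lambda>w. frechet_op g J w * f w) z)"
    using f g by (simp add: DJ_add difffun_pd difffun_mult distrib_left frechet_op_def mult_ac)
  finally show "euler (\<lambda>z. f z * g z) z = adjapply (frechet_op f) g z + adjapply (frechet_op g) f z"
    by (simp add: adjapply_expand[OF finite_indices_le sf(1)] adjapply_expand[OF finite_indices_le sf(2)] sum.distrib)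
qed

text \<open>By \<open>pd_U_Dtot\<close>, \<open>E\<^sub>u(D\<^sub>i h)\<close> splits into two sums which cancel after the shift
\<open>K = inc i M\<close>, because their signs \<open>(-1)\<^bsup>|K|\<^esup>\<close> and \<open>(-1)\<^bsup>|M|\<^esup>\<close> are opposite.\<close>

lemma euler_Dtot:
  fixes h :: "('i::finite) dfun"
  assumes h: "difffun h"
  shows "euler (Dtot i h) = (\<lambda>z. 0)"
proof
  fix z
  obtain N where N: "order_le N h" using difffun_order_le h by blast
  let ?A = "indices_le (Suc N)" and ?s = "\<lambda>K. (-1::real) ^ mlen K"
  have split: "?s K * DJ K (pd (U K) (Dtot i h)) z
      = ?s K * DJ (inc i K) (pd (U K) h) z + (if 0 < K i then ?s K * DJ K (pd (U (dec i K)) h) z else 0)" for K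
    using h by (cases "0 < K i")
      (simp_all add: pd_U_Dtot[OF h] DJ_add DJ_inc_inner difffun_Dtot difffun_pd distrib_left)
  have "euler (Dtot i h) z = (\<Sum>K\<in>?A. ?s K * DJ K (pd (U K) (Dtot i h)) z)"
    by (simp add: euler_expand[OF order_le_Dtot[OF h N]])
  also have "\<dots> = (\<Sum>K\<in>?A. ?s K * DJ (inc i K) (pd (U K) h) z)
       + (\<Sum>K\<in>?A. if 0 < K i then ?s K * DJ K (pd (U (dec i K)) h) z else 0)"
    unfolding split by (rule sum.distrib)
  also have "(\<Sum>K\<in>?A. if 0 < K i then ?s K * DJ K (pd (U (dec i K)) h) z else 0)
      = (\<Sum>M\<in>indices_le N. ?s (inc i M) * DJ (inc i M) (pd (U M) h) z)"
    by (rule sum_shift_inc[OF inc_indices_le finite_indices_le, where F="\<lambda>K M. ?s K * DJ K (pd (U M) h) z"])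
       (use order_leD[OF N] in \<open>auto simp: indices_le_def\<close>)
  also have "(\<Sum>K\<in>?A. ?s K * DJ (inc i K) (pd (U K) h) z) = (\<Sum>K\<in>indices_le N. ?s K * DJ (inc i K) (pd (U K) h) z)"
    by (rule sum.mono_neutral_right[OF finite_indices_le indices_le_mono])
       (use order_leD[OF N] in \<open>auto simp: indices_le_def\<close>)
  finally show "euler (Dtot i h) z = 0" by (simp add: mlen_inc sum_negf)
qed

section \<open>Divergences and integration by parts\<close>

definition divergence :: "('i::finite) dfun \<Rightarrow> bool" where
  "divergence h \<longleftrightarrow> (\<exists>F. (\<forall>i. difffun (F i)) \<and> h = (\<lambda>z. \<Sum>i\<in>UNIV. Dtot i (F i) z))"

lemma divergence_cong: "divergence h \<Longrightarrow> (\<And>z. h z = g z) \<Longrightarrow> divergence g"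
  by (metis ext)

lemma divergence_zero: "divergence (\<lambda>z. 0::real)"
  unfolding divergence_def by (rule exI[of _ "\<lambda>i z. 0"]) simp

lemma divergence_Dtot: "difffun g \<Longrightarrow> divergence (Dtot i g)"
  unfolding divergence_def
proof (rule exI[of _ "\<lambda>j. if j = i then g else (\<lambda>z. 0)"], intro conjI allI ext)
  show "Dtot i g z = (\<Sum>j\<in>UNIV. Dtot j (if j = i then g else (\<lambda>z. 0)) z)" for z
    by (simp add: if_distrib[of "\<lambda>f. Dtot _ f _"] cong: if_cong)
qed auto

lemma divergence_add: "divergence f \<Longrightarrow> divergence g \<Longrightarrow> divergence (\<lambda>z. f z + g z)"
proof -
  assume "divergence f" "divergence g"
  then obtain F G where F: "\<forall>i. difffun (F i)" "f = (\<lambda>z. \<Sum>i\<in>UNIV. Dtot i (F i) z)"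
    and G: "\<forall>i. difffun (G i)" "g = (\<lambda>z. \<Sum>i\<in>UNIV. Dtot i (G i) z)"
    unfolding divergence_def by blast
  show ?thesis unfolding divergence_def
    by (rule exI[of _ "\<lambda>i z. F i z + G i z"]) (use F G in \<open>auto simp: Dtot_add sum.distrib\<close>)
qed

lemma divergence_cmult: "divergence f \<Longrightarrow> divergence (\<lambda>z. k * f z)"
proof -
  assume "divergence f"
  then obtain F where F: "\<forall>i. difffun (F i)" "f = (\<lambda>z. \<Sum>i\<in>UNIV. Dtot i (F i) z)"
    unfolding divergence_def by blast
  show ?thesis unfolding divergence_def
    by (rule exI[of _ "\<lambda>i z. k * F i z"]) (use F in \<open>auto simp: Dtot_cmult sum_distrib_left\<close>)
qed

lemma divergence_diff: "divergence f \<Longrightarrow> divergence g \<Longrightarrow> divergence (\<lambda>z. f z - g z)"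
  using divergence_add[OF _ divergence_cmult[of g "-1"]] by simp

lemma divergence_sum: "(\<And>a. a \<in> A \<Longrightarrow> divergence (F a)) \<Longrightarrow> divergence (\<lambda>z. \<Sum>a\<in>A. F a z)"
proof (induction A rule: infinite_finite_induct)
  case (insert x A) then show ?case by (simp add: divergence_add)
qed (auto simp: divergence_zero)

lemma euler_divergence: "divergence h \<Longrightarrow> euler h = (\<lambda>z. 0)"
  unfolding divergence_def by (auto simp: euler_sum euler_Dtot difffun_Dtot)

lemma euler_eq_if_divergence_diff:
  assumes "divergence (\<lambda>z. f z - g z)" "difffun f" "difffun (g::('i::finite) dfun)"
  shows "euler f = euler g"
  using euler_divergence[OF assms(1)] euler_diff[OF assms(2,3)] by (simp add: fun_eq_iff)

lemma divergence_DJ_by_parts: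
  fixes a b :: "('i::finite) dfun"
  assumes "difffun a" "difffun b"
  shows "divergence (\<lambda>z. a z * DJ J b z - (-1::real) ^ mlen J * DJ J a z * b z)"
  using assms
proof (induction J arbitrary: a b rule: multi_index_induct)
  case 1
  show ?case by (auto simp: mlen_def intro: divergence_cong[OF divergence_zero])
next
  case (2 J i)
  have T1: "divergence (\<lambda>z. a z * DJ J (Dtot i b) z - (-1::real) ^ mlen J * DJ J a z * Dtot i b z)"
    using 2 by (simp add: difffun_Dtot)
  have T2: "divergence (\<lambda>z. (-1::real) ^ mlen J * Dtot i (\<lambda>z. DJ J a z * b z) z)"
    using 2 by (intro divergence_cmult divergence_Dtot difffun_mult difffun_DJ)
  have e: "Dtot i (\<lambda>z. DJ J a z * b z) = (\<lambda>z. Dtot i (DJ J a) z * b z + DJ J a z * Dtot i b z)"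
    using 2 by (intro Dtot_mult difffun_DJ)
  show ?case
    using divergence_add[OF T1 T2]
    by (rule divergence_cong) (unfold e DJ_inc_inner[OF "2.prems"(2)] DJ_inc[OF "2.prems"(1)] mlen_inc,
        simp add: algebra_simps)
qed

lemma divergence_adjoint_by_parts:
  fixes R :: "('i::finite) dop"
  assumes R: "is_dop R" and C: "difffun C" and B: "difffun B"
  shows "divergence (\<lambda>z. C z * applyop R B z - adjapply R C z * B z)"
proof -
  have RJ: "difffun (R J)" for J using R unfolding is_dop_def by blast
  have "divergence (\<lambda>z. \<Sum>J\<in>dsupp R. (R J z * C z) * DJ J B z
      - (-1::real) ^ mlen J * DJ J (\<lambda>w. R J w * C w) z * B z)"
    by (intro divergence_sum divergence_DJ_by_parts[where a="\<lambda>w. R J w * C w" for J, simplified]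
        difffun_mult RJ C B)
  then show ?thesis
    by (rule divergence_cong)
       (simp add: applyop_def adjapply_def sum_distrib_left sum_distrib_right sum_subtractf mult_ac)
qed

section \<open>Frechet derivatives\<close>

lemma frechet_mult:
  fixes f g :: "('i::finite) dfun"
  assumes f: "difffun f" and g: "difffun g"
  shows "frechet (\<lambda>z. f z * g z) P = (\<lambda>z. frechet f P z * g z + f z * frechet g P z)"
proof -
  obtain N where N: "order_le N f" "order_le N g" using difffun_order_le2 assms by blast
  have l: "line_differentiable f" "line_differentiable g" using assms difffun_line_differentiable by auto
  have N': "order_le N (\<lambda>z. f z * g z)" using N l by (rule order_le_mult)
  show ?thesis
    by (simp add: frechet_expand[OF N'] frechet_expand[OF N(1)] frechet_expand[OF N(2)] pd_mult[OF l]
        algebra_simps sum.distrib sum_distrib_left sum_distrib_right)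
qed

lemma frechet_add:
  fixes f g :: "('i::finite) dfun"
  assumes f: "difffun f" and g: "difffun g"
  shows "frechet (\<lambda>z. f z + g z) P = (\<lambda>z. frechet f P z + frechet g P z)"
proof -
  obtain N where N: "order_le N f" "order_le N g" using difffun_order_le2 assms by blast
  have l: "line_differentiable f" "line_differentiable g" using assms difffun_line_differentiable by auto
  have N': "order_le N (\<lambda>z. f z + g z)" using N l by (rule order_le_add)
  show ?thesis
    by (simp add: frechet_expand[OF N'] frechet_expand[OF N(1)] frechet_expand[OF N(2)] pd_add[OF l]
        algebra_simps sum.distrib)
qed

lemma frechet_cmult:
  fixes f :: "('i::finite) dfun"
  assumes f: "difffun f"
  shows "frechet (\<lambda>z. k * f z) P = (\<lambda>z. k * frechet f P z)"
  using frechet_mult[OF difffun_const f, of k P] by (simp add: frechet_def frechet_op_def pd_const applyop_def dsupp_def)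

lemma frechet_zero[simp]: "frechet (\<lambda>z. 0) P = (\<lambda>z. 0)"
  by (simp add: frechet_def frechet_op_def pd_const applyop_def dsupp_def)

lemma frechet_diff:
  fixes f g :: "('i::finite) dfun"
  assumes f: "difffun f" and g: "difffun g"
  shows "frechet (\<lambda>z. f z - g z) P = (\<lambda>z. frechet f P z - frechet g P z)"
  using frechet_add[OF f difffun_cmult[OF g], of "-1" P] frechet_cmult[OF g, of "-1" P] by simp

lemma frechet_sum:
  fixes F :: "'a \<Rightarrow> ('i::finite) dfun"
  assumes "\<And>a. a \<in> A \<Longrightarrow> difffun (F a)"
  shows "frechet (\<lambda>z. \<Sum>a\<in>A. F a z) P = (\<lambda>z. \<Sum>a\<in>A. frechet (F a) P z)"
  using assms
proof (induction A rule: infinite_finite_induct)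
  case (insert x A)
  then show ?case by (simp add: frechet_add difffun_sum)
qed auto

lemma applyop_diff:
  fixes A :: "('i::finite) dop"
  assumes "difffun P" "difffun Q"
  shows "applyop A (\<lambda>z. P z - Q z) = (\<lambda>z. applyop A P z - applyop A Q z)"
  using assms by (simp add: applyop_def DJ_diff algebra_simps sum_subtractf)

lemma frechet_diff_right:
  fixes f :: "('i::finite) dfun"
  assumes "difffun P" "difffun Q"
  shows "frechet f (\<lambda>z. P z - Q z) = (\<lambda>z. frechet f P z - frechet f Q z)"
  unfolding frechet_def using applyop_diff[OF assms] .

lemma frechet_Dtot:
  fixes h :: "('i::finite) dfun"
  assumes h: "difffun h" and P: "difffun P"
  shows "frechet (Dtot i h) P = Dtot i (frechet h P)"
proof
  fix z
  obtain N where N: "order_le N h" using difffun_order_le h by blast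
  have N1: "order_le (Suc N) (Dtot i h)" using order_le_Dtot[OF h N] .
  let ?A = "indices_le (Suc N)"
  have "frechet (Dtot i h) P z = (\<Sum>K\<in>?A. pd (U K) (Dtot i h) z * DJ K P z)" by (simp add: frechet_expand[OF N1])
  also have "\<dots> = (\<Sum>K\<in>?A. Dtot i (pd (U K) h) z * DJ K P z + (if 0 < K i then pd (U (dec i K)) h z * DJ K P z else 0))"
    by (intro sum.cong refl) (simp add: pd_U_Dtot[OF h] distrib_right)
  also have "\<dots> = (\<Sum>K\<in>?A. Dtot i (pd (U K) h) z * DJ K P z) + (\<Sum>K\<in>?A. if 0 < K i then pd (U (dec i K)) h z * DJ K P z else 0)"
    by (simp add: sum.distrib)
  also have "(\<Sum>K\<in>?A. if 0 < K i then pd (U (dec i K)) h z * DJ K P z else 0) = (\<Sum>M\<in>indices_le N. pd (U M) h z * DJ (inc i M) P z)"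
    by (rule sum_shift_inc[OF inc_indices_le finite_indices_le, where F="\<lambda>K M. pd (U M) h z * DJ K P z"])
       (use order_leD[OF N] in \<open>auto simp: indices_le_def\<close>)
  also have "(\<Sum>K\<in>?A. Dtot i (pd (U K) h) z * DJ K P z) = (\<Sum>K\<in>indices_le N. Dtot i (pd (U K) h) z * DJ K P z)"
    by (rule sum.mono_neutral_right[OF finite_indices_le indices_le_mono]) (use order_leD[OF N] in \<open>auto simp: indices_le_def\<close>)
  also have "(\<Sum>K\<in>indices_le N. Dtot i (pd (U K) h) z * DJ K P z) + (\<Sum>M\<in>indices_le N. pd (U M) h z * DJ (inc i M) P z)
      = Dtot i (\<lambda>z. \<Sum>K\<in>indices_le N. pd (U K) h z * DJ K P z) z"
    using h P by (simp add: Dtot_sum Dtot_mult difffun_pd difffun_DJ difffun_mult DJ_inc sum.distrib)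
  finally show "frechet (Dtot i h) P z = Dtot i (frechet h P) z" by (simp add: frechet_expand[OF N])
qed

lemma frechet_DJ:
  fixes h :: "('i::finite) dfun"
  assumes h: "difffun h" and P: "difffun P"
  shows "frechet (DJ J h) P = DJ J (frechet h P)"
proof (induction J rule: multi_index_induct)
  case (2 J i)
  have "frechet (DJ (inc i J) h) P = Dtot i (frechet (DJ J h) P)"
    using h P by (simp add: DJ_inc frechet_Dtot difffun_DJ)
  then show ?case using 2 h P by (simp add: DJ_inc difffun_frechet)
qed simp

lemma divergence_frechet:
  fixes h :: "('i::finite) dfun"
  assumes "divergence h" and B: "difffun B"
  shows "divergence (frechet h B)"
proof -
  obtain F where F: "\<forall>i. difffun (F i)" "h = (\<lambda>z. \<Sum>i\<in>UNIV. Dtot i (F i) z)" using assms(1) unfolding divergence_def by blast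
  have "frechet h B = (\<lambda>z. \<Sum>i\<in>UNIV. Dtot i (frechet (F i) B) z)"
    using F B by (simp add: frechet_sum difffun_Dtot frechet_Dtot)
  then show ?thesis unfolding divergence_def using F B by (intro exI[of _ "\<lambda>i. frechet (F i) B"]) (auto intro!: difffun_frechet)
qed

lemma second_variation:
  fixes L :: "('i::finite) dfun"
  assumes L: "difffun L" and P: "difffun P" and B: "difffun B"
  shows "(\<lambda>z. frechet (frechet L P) B z - frechet (frechet L B) P z) = frechet L (\<lambda>z. frechet P B z - frechet B P z)"
proof -
  obtain N where N: "order_le N L" using difffun_order_le L by blast
  have sL: "smooth L" using L difffun_smooth by blast
  have NK: "order_le N (pd (U K) L)" for K using order_le_pd[OF N sL] .
  have expand: "frechet (frechet L Q) R = (\<lambda>z. (\<Sum>K\<in>indices_le N. \<Sum>J\<in>indices_le N. pd (U J) (pd (U K) L) z * DJ J R z * DJ K Q z)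
        + (\<Sum>K\<in>indices_le N. pd (U K) L z * DJ K (frechet Q R) z))"
    if Q: "difffun Q" and R: "difffun R" for Q R
  proof -
    have "frechet (frechet L Q) R = frechet (\<lambda>z. \<Sum>K\<in>indices_le N. pd (U K) L z * DJ K Q z) R"
      by (simp add: frechet_expand[OF N])
    also have "\<dots> = (\<lambda>z. \<Sum>K\<in>indices_le N. frechet (\<lambda>z. pd (U K) L z * DJ K Q z) R z)"
      using L Q by (intro frechet_sum difffun_mult difffun_pd difffun_DJ)
    also have "\<dots> = (\<lambda>z. \<Sum>K\<in>indices_le N. frechet (pd (U K) L) R z * DJ K Q z + pd (U K) L z * DJ K (frechet Q R) z)"
      using L Q R by (simp add: frechet_mult difffun_pd difffun_DJ frechet_DJ)
    also have "\<dots> = (\<lambda>z. (\<Sum>K\<in>indices_le N. \<Sum>J\<in>indices_le N. pd (U J) (pd (U K) L) z * DJ J R z * DJ K Q z)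
        + (\<Sum>K\<in>indices_le N. pd (U K) L z * DJ K (frechet Q R) z))"
      by (simp add: frechet_expand[OF NK] sum.distrib sum_distrib_right)
    finally show ?thesis .
  qed
  have sym: "(\<Sum>K\<in>indices_le N. \<Sum>J\<in>indices_le N. pd (U J) (pd (U K) L) z * DJ J B z * DJ K P z)
      = (\<Sum>K\<in>indices_le N. \<Sum>J\<in>indices_le N. pd (U J) (pd (U K) L) z * DJ J P z * DJ K B z)" for z
    by (subst sum.swap) (simp add: pd_commute[OF sL] mult_ac)
  have e3: "frechet L (\<lambda>z. frechet P B z - frechet B P z) = (\<lambda>z. (\<Sum>K\<in>indices_le N. pd (U K) L z * DJ K (frechet P B) z)
      - (\<Sum>K\<in>indices_le N. pd (U K) L z * DJ K (frechet B P) z))"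
    unfolding frechet_diff_right[OF difffun_frechet[OF P B] difffun_frechet[OF B P]] frechet_expand[OF N] ..
  show ?thesis
  proof
    fix z
    show "frechet (frechet L P) B z - frechet (frechet L B) P z = frechet L (\<lambda>z. frechet P B z - frechet B P z) z"
      unfolding e3 expand[OF P B] expand[OF B P] using sym[of z] by simp
  qed
qed

lemma frechet_applyop:
  fixes W :: "('i::finite) dop"
  assumes W: "is_dop W" and G: "difffun G" and P: "difffun P"
  shows "frechet (applyop W G) P = (\<lambda>z. applyop (\<lambda>J. frechet (W J) P) G z + applyop W (frechet G P) z)"
proof -
  have WJ: "difffun (W J)" for J using W unfolding is_dop_def by blast
  have fin: "finite (dsupp W)" using W unfolding is_dop_def by blast
  have sub: "dsupp (\<lambda>J. frechet (W J) P) \<subseteq> dsupp W" unfolding dsupp_def by auto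
  have "frechet (applyop W G) P = frechet (\<lambda>z. \<Sum>J\<in>dsupp W. W J z * DJ J G z) P" by (simp add: applyop_def)
  also have "\<dots> = (\<lambda>z. \<Sum>J\<in>dsupp W. frechet (\<lambda>z. W J z * DJ J G z) P z)"
    using WJ G by (intro frechet_sum difffun_mult difffun_DJ)
  also have "\<dots> = (\<lambda>z. \<Sum>J\<in>dsupp W. frechet (W J) P z * DJ J G z + W J z * DJ J (frechet G P) z)"
    using WJ G P by (simp add: frechet_mult difffun_DJ frechet_DJ)
  also have "\<dots> = (\<lambda>z. applyop (\<lambda>J. frechet (W J) P) G z + applyop W (frechet G P) z)"
    by (simp add: applyop_expand[OF fin sub] applyop_def sum.distrib)
  finally show ?thesis .
qed

section \<open>The fundamental lemma of the calculus of variations\<close>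

primrec vanishes_to_order :: "('i::finite) jet \<Rightarrow> nat \<Rightarrow> 'i dfun \<Rightarrow> bool" where
  "vanishes_to_order z0 0 h \<longleftrightarrow> h z0 = 0"
| "vanishes_to_order z0 (Suc m) h \<longleftrightarrow> h z0 = 0 \<and> (\<forall>i. vanishes_to_order z0 m (Dtot i h))"

lemma vanishes_to_order_at: "vanishes_to_order z0 m h \<Longrightarrow> h z0 = 0"
  by (cases m) auto

lemma vanishes_to_order_add:
  "difffun f \<Longrightarrow> difffun g \<Longrightarrow> vanishes_to_order z0 m f \<Longrightarrow> vanishes_to_order z0 m g \<Longrightarrow>
    vanishes_to_order z0 m (\<lambda>z. f z + g z)"
  by (induction m arbitrary: f g) (simp_all add: Dtot_add difffun_Dtot)

lemma vanishes_to_order_Suc: "difffun h \<Longrightarrow> vanishes_to_order z0 (Suc m) h \<Longrightarrow> vanishes_to_order z0 m h"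
  by (induction m arbitrary: h) (simp_all add: difffun_Dtot)

lemma vanishes_to_order_mult:
  "difffun g \<Longrightarrow> difffun h \<Longrightarrow> vanishes_to_order z0 m h \<Longrightarrow> vanishes_to_order z0 m (\<lambda>z. g z * h z)"
proof (induction m arbitrary: g h)
  case (Suc m)
  have h: "vanishes_to_order z0 m h" using vanishes_to_order_Suc Suc.prems by blast
  have "vanishes_to_order z0 m (\<lambda>z. Dtot i g z * h z + g z * Dtot i h z)" for i
    using Suc by (intro vanishes_to_order_add Suc.IH difffun_mult difffun_Dtot h) auto
  then show ?case using Suc.prems by (simp add: Dtot_mult)
qed simp

lemma DJ_eq_0_if_vanishes_to_order:
  fixes K :: "'i::finite \<Rightarrow> nat"
  assumes "difffun h" "vanishes_to_order z0 m h" "mlen K \<le> m"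
  shows "DJ K h z0 = 0"
  using assms
proof (induction K arbitrary: h m rule: multi_index_induct)
  case 1 then show ?case by (auto intro: vanishes_to_order_at)
next
  case (2 K i)
  obtain m' where m: "m = Suc m'" using "2.prems"(3) by (cases m) (auto simp: mlen_inc)
  have "DJ K (Dtot i h) z0 = 0"
    using 2 m by (intro "2.IH"[of _ m']) (simp_all add: difffun_Dtot mlen_inc)
  then show ?case by (simp add: DJ_inc_inner[OF "2.prems"(1)])
qed

definition pow_fact :: "nat \<Rightarrow> real \<Rightarrow> real" where "pow_fact n x = x ^ n / fact n"

definition x_monomial :: "('i::finite) jet \<Rightarrow> ('i \<Rightarrow> nat) \<Rightarrow> 'i dfun" where
  "x_monomial z0 L = (\<lambda>z. \<Prod>j\<in>UNIV. pow_fact (L j) (z (X j) - z0 (X j)))"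

lemma pow_fact_DERIV: "((\<lambda>t. pow_fact n (t - a)) has_real_derivative (if 0 < n then pow_fact (n - 1) (t - a) else 0)) (at t)"
proof (cases n)
  case 0 then show ?thesis by (simp add: pow_fact_def)
next
  case (Suc k)
  have p: "((\<lambda>x. x ^ Suc k) has_real_derivative real (Suc k) * (t - a) ^ k) (at (t - a))"
    using DERIV_pow[of "Suc k" "t - a" UNIV] by simp
  have q: "((\<lambda>t. t - a) has_real_derivative 1) (at t)" by (auto intro!: derivative_eq_intros)
  have "((\<lambda>t. (t - a) ^ Suc k / fact (Suc k)) has_real_derivative (real (Suc k) * (t - a) ^ k * 1 / fact (Suc k))) (at t)"
    by (rule DERIV_cdivide[OF DERIV_chain2[OF p q]])
  moreover have "real (Suc k) * (t - a) ^ k * 1 / fact (Suc k) = (t - a) ^ k / fact k"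
    by (simp add: fact_Suc divide_simps)
  ultimately show ?thesis using Suc by (simp add: pow_fact_def)
qed

lemma difffun_pow_fact: "difffun f \<Longrightarrow> difffun (\<lambda>z. pow_fact n (f z))"
proof -
  assume f: "difffun f"
  have "difffun (\<lambda>z. f z ^ n)" by (induction n) (use f in \<open>auto intro: difffun_mult\<close>)
  then show ?thesis unfolding pow_fact_def using difffun_mult[OF _ difffun_const, of "\<lambda>z. f z ^ n" "1 / fact n"] by simp
qed

lemma difffun_x_monomial: "difffun (x_monomial z0 L)"
  unfolding x_monomial_def by (intro difffun_prod difffun_pow_fact difffun_diff difffun_coord difffun_const)

lemma depends_only_on_x_monomial: "depends_only_on (range X) (x_monomial z0 L)"
  unfolding x_monomial_def depends_only_on_def by (auto intro!: prod.cong)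

lemma pd_U_if_x_only: "depends_only_on (range X) f \<Longrightarrow> pd (U J) f = (\<lambda>z. 0)"
  by (rule pd_eq_0_if_depends_only_on) auto

lemma order_le_0_if_x_only: "depends_only_on (range X) f \<Longrightarrow> order_le 0 f"
  unfolding order_le_def using pd_U_if_x_only by blast

lemma Dtot_if_x_only: "depends_only_on (range X) (f::('i::finite) dfun) \<Longrightarrow> Dtot i f = pd (X i) f"
  by (simp add: Dtot_expand[OF order_le_0_if_x_only] pd_U_if_x_only)

lemma pd_X_x_monomial: "pd (X i) (x_monomial z0 L) = (if 0 < L i then x_monomial z0 (dec i L) else (\<lambda>z. 0))"
proof (rule pd_eqI)
  fix z :: "'a jet"
  let ?r = "\<Prod>j\<in>UNIV - {i}. pow_fact (L j) (z (X j) - z0 (X j))"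
  have split: "x_monomial z0 L (z(X i := t)) = pow_fact (L i) (t - z0 (X i)) * ?r" for t
  proof -
    have "x_monomial z0 L (z(X i := t)) = pow_fact (L i) ((z(X i := t)) (X i) - z0 (X i)) * (\<Prod>j\<in>UNIV - {i}. pow_fact (L j) ((z(X i := t)) (X j) - z0 (X j)))"
      unfolding x_monomial_def by (rule prod.remove) auto
    also have "(\<Prod>j\<in>UNIV - {i}. pow_fact (L j) ((z(X i := t)) (X j) - z0 (X j))) = ?r" by (intro prod.cong) auto
    finally show ?thesis by (simp only: fun_upd_same)
  qed
  have "((\<lambda>t. pow_fact (L i) (t - z0 (X i)) * ?r) has_real_derivative (if 0 < L i then pow_fact (L i - 1) (z (X i) - z0 (X i)) else 0) * ?r) (at (z (X i)))"
    by (intro DERIV_cmult_right pow_fact_DERIV) 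
  moreover have "(if 0 < L i then pow_fact (L i - 1) (z (X i) - z0 (X i)) else 0) * ?r = (if 0 < L i then x_monomial z0 (dec i L) else (\<lambda>z. 0)) z"
  proof (cases "0 < L i")
    case True
    have "x_monomial z0 (dec i L) z = pow_fact (dec i L i) (z (X i) - z0 (X i)) * (\<Prod>j\<in>UNIV - {i}. pow_fact (dec i L j) (z (X j) - z0 (X j)))"
      unfolding x_monomial_def by (rule prod.remove) auto
    also have "(\<Prod>j\<in>UNIV - {i}. pow_fact (dec i L j) (z (X j) - z0 (X j))) = ?r" by (intro prod.cong) (auto simp: dec_def)
    finally show ?thesis using True by (simp add: dec_def fun_upd_def)
  qed simp
  ultimately show "((\<lambda>t. x_monomial z0 L (z(X i := t))) has_real_derivative (if 0 < L i then x_monomial z0 (dec i L) else (\<lambda>z. 0)) z) (at (z (X i)))"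
    unfolding split by simp
qed

lemma Dtot_x_monomial: "Dtot i (x_monomial z0 L) = (if 0 < L i then x_monomial z0 (dec i L) else (\<lambda>z. 0))"
  by (simp add: Dtot_if_x_only[OF depends_only_on_x_monomial] pd_X_x_monomial)

lemma x_monomial_at_base: "x_monomial z0 L z0 = (if L = (\<lambda>i. 0) then 1 else 0)"
proof (cases "L = (\<lambda>i. 0)")
  case True then show ?thesis by (simp add: x_monomial_def pow_fact_def)
next
  case False
  then obtain i where i: "L i \<noteq> 0" by auto
  have "pow_fact (L i) (z0 (X i) - z0 (X i)) = 0" using i by (simp add: pow_fact_def)
  then have "x_monomial z0 L z0 = 0" unfolding x_monomial_def by (intro prod_zero) auto
  then show ?thesis using False by simp
qed

definition idx_add :: "('i \<Rightarrow> nat) \<Rightarrow> ('i \<Rightarrow> nat) \<Rightarrow> ('i \<Rightarrow> nat)" where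
  "idx_add M L = (\<lambda>i. M i + L i)"

lemma idx_add_0[simp]: "idx_add M (\<lambda>i. 0) = M"
  unfolding idx_add_def by simp

lemma idx_add_inc: "idx_add M (inc i L) = idx_add (inc i M) L"
  unfolding idx_add_def inc_def by (auto simp: fun_eq_iff)

text \<open>\<open>taylor_test_fun z\<^sub>0 M m\<close> is \<open>u\<^sub>M\<close> minus the Taylor polynomial of order \<open>m\<close> in \<open>x\<close> at
\<open>z\<^sub>0\<close> of the function whose \<open>x\<close>-derivatives at \<open>z\<^sub>0\<close> are the jet coordinates \<open>u\<^sub>M\<^sub>+\<^sub>L\<close> of \<open>z\<^sub>0\<close>.
Hence its total derivatives vanish at \<open>z\<^sub>0\<close> up to order \<open>m\<close>, while for \<open>M = 0\<close> its Frechet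
derivative is the identity.\<close>

definition taylor_test_fun :: "('i::finite) jet \<Rightarrow> ('i \<Rightarrow> nat) \<Rightarrow> nat \<Rightarrow> 'i dfun" where
  "taylor_test_fun z0 M m = (\<lambda>z. z (U M) - (\<Sum>L\<in>indices_le m. z0 (U (idx_add M L)) * x_monomial z0 L z))"

lemma difffun_taylor_test_fun: "difffun (taylor_test_fun z0 M m)"
  unfolding taylor_test_fun_def by (intro difffun_diff difffun_coord difffun_sum difffun_mult difffun_const difffun_x_monomial)

lemma taylor_test_fun_at_base: "taylor_test_fun z0 M m z0 = 0"
proof -
  have "(\<Sum>L\<in>indices_le m. z0 (U (idx_add M L)) * x_monomial z0 L z0) = (\<Sum>L\<in>indices_le m. if L = (\<lambda>i. 0) then z0 (U (idx_add M L)) else 0)"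
    by (intro sum.cong) (auto simp: x_monomial_at_base)
  also have "\<dots> = z0 (U M)" by (simp add: sum.delta[OF finite_indices_le])
  finally show ?thesis unfolding taylor_test_fun_def by simp
qed

lemma Dtot_taylor_test_fun: "Dtot i (taylor_test_fun z0 M (Suc m)) = taylor_test_fun z0 (inc i M) m"
proof
  fix z
  have dS: "difffun (\<lambda>z. \<Sum>L\<in>indices_le (Suc m). z0 (U (idx_add M L)) * x_monomial z0 L z)"
    by (intro difffun_sum difffun_mult difffun_const difffun_x_monomial)
  have "Dtot i (\<lambda>z. \<Sum>L\<in>indices_le (Suc m). z0 (U (idx_add M L)) * x_monomial z0 L z) z
      = (\<Sum>L\<in>indices_le (Suc m). z0 (U (idx_add M L)) * Dtot i (x_monomial z0 L) z)"
    by (simp add: Dtot_sum Dtot_cmult difffun_mult difffun_x_monomial)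
  also have "\<dots> = (\<Sum>L\<in>indices_le (Suc m). if 0 < L i then z0 (U (idx_add M L)) * x_monomial z0 (dec i L) z else 0)"
    by (intro sum.cong) (auto simp: Dtot_x_monomial)
  also have "\<dots> = (\<Sum>L\<in>indices_le m. z0 (U (idx_add M (inc i L))) * x_monomial z0 L z)"
    by (rule sum_shift_inc[OF inc_indices_le finite_indices_le, where F="\<lambda>K L. z0 (U (idx_add M K)) * x_monomial z0 L z"])
       (auto simp: indices_le_def mlen_dec)
  finally show "Dtot i (taylor_test_fun z0 M (Suc m)) z = taylor_test_fun z0 (inc i M) m z"
    unfolding taylor_test_fun_def using dS by (simp add: Dtot_diff Dtot_coord_U idx_add_inc)
qed

lemma vanishes_taylor_test_fun: "vanishes_to_order z0 m (taylor_test_fun z0 M m)"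
proof (induction m arbitrary: M)
  case 0 then show ?case by (simp add: taylor_test_fun_at_base)
next
  case (Suc m) then show ?case by (simp add: taylor_test_fun_at_base Dtot_taylor_test_fun)
qed

lemma pd_U_taylor_test_fun: "pd (U J) (taylor_test_fun z0 (\<lambda>i. 0) m) = (\<lambda>z. if J = (\<lambda>i. 0) then 1 else 0)"
proof -
  have x_only: "depends_only_on (range X) (\<lambda>z. \<Sum>L\<in>indices_le m. z0 (U (idx_add (\<lambda>i. 0) L)) * x_monomial z0 L z)"
    by (intro depends_only_on_sum depends_only_on_mult depends_only_on_const depends_only_on_x_monomial)
  have "pd (U J) (taylor_test_fun z0 (\<lambda>i. 0) m) = (\<lambda>z. pd (U J) (\<lambda>z. z (U (\<lambda>i. 0))) z - pd (U J) (\<lambda>z. \<Sum>L\<in>indices_le m. z0 (U (idx_add (\<lambda>i. 0) L)) * x_monomial z0 L z) z)"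
    unfolding taylor_test_fun_def by (intro pd_diff line_differentiable_coord difffun_line_differentiable difffun_sum difffun_mult difffun_const difffun_x_monomial)
  also have "\<dots> = (\<lambda>z. if J = (\<lambda>i. 0) then 1 else 0)"
    by (simp add: pd_coord pd_U_if_x_only[OF x_only])
  finally show ?thesis .
qed


lemma adjapply_frechet_op_taylor_test_fun:
  "adjapply (frechet_op (taylor_test_fun z0 (\<lambda>i. 0) m)) Y = Y"
proof -
  have "dsupp (frechet_op (taylor_test_fun z0 (\<lambda>i. 0) m)) \<subseteq> {\<lambda>i. 0}"
    unfolding dsupp_def frechet_op_def pd_U_taylor_test_fun by auto
  from adjapply_expand[OF _ this] show ?thesis
    by (simp add: frechet_op_def pd_U_taylor_test_fun mlen_def)
qed

lemma adjapply_frechet_op_eq_0_if_vanishes_to_order: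
  fixes Y :: "('i::finite) dfun"
  assumes Y: "difffun Y" "order_le N Y" and B: "difffun B" "vanishes_to_order z0 N B"
  shows "adjapply (frechet_op Y) B z0 = 0"
proof -
  have "DJ J (\<lambda>w. pd (U J) Y w * B w) z0 = 0" if "J \<in> indices_le N" for J
    using that Y B unfolding indices_le_def
    by (intro DJ_eq_0_if_vanishes_to_order[of _ z0 N] vanishes_to_order_mult difffun_mult difffun_pd) auto
  then show ?thesis
    using adjapply_expand[OF finite_indices_le dsupp_frechet_op_subset[OF Y(2)], of B]
    by (simp add: frechet_op_def)
qed

lemma eq_zero_if_euler_mult_eq_zero:
  fixes Y :: "('i::finite) dfun"
  assumes Y: "difffun Y" and E: "\<And>B. difffun B \<Longrightarrow> euler (\<lambda>z. Y z * B z) = (\<lambda>z. 0)"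
  shows "Y = (\<lambda>z. 0)"
proof
  fix z0 :: "'i jet"
  obtain N where N: "order_le N Y" using difffun_order_le Y by blast
  define B where "B = taylor_test_fun z0 (\<lambda>i. 0) N"
  have B: "difffun B" "vanishes_to_order z0 N B"
    unfolding B_def by (rule difffun_taylor_test_fun, rule vanishes_taylor_test_fun)
  have "0 = euler (\<lambda>z. Y z * B z) z0" using E[OF B(1)] by simp
  also have "\<dots> = adjapply (frechet_op Y) B z0 + adjapply (frechet_op B) Y z0"
    by (simp add: euler_mult[OF Y B(1)])
  also have "\<dots> = Y z0"
    using adjapply_frechet_op_eq_0_if_vanishes_to_order[OF Y N B]
    by (simp add: B_def adjapply_frechet_op_taylor_test_fun)
  finally show "Y z0 = 0" by simp
qed

lemma eq_if_pairing_diff_divergence: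
  fixes Y Y' :: "('i::finite) dfun"
  assumes "difffun Y" "difffun Y'"
    and "\<And>B. difffun B \<Longrightarrow> divergence (\<lambda>z. Y z * B z - Y' z * B z)"
  shows "Y = Y'"
proof -
  have "(\<lambda>z. Y z - Y' z) = (\<lambda>z. 0)"
  proof (rule eq_zero_if_euler_mult_eq_zero)
    show "euler (\<lambda>z. (Y z - Y' z) * B z) = (\<lambda>z. 0)" if "difffun B" for B
      using euler_divergence[OF assms(3)[OF that]] by (simp add: left_diff_distrib)
  qed (use assms in auto)
  then show ?thesis by (simp add: fun_eq_iff)
qed

section \<open>The Helmholtz conditions and adjoint-symmetries\<close>

lemma divergence_frechet_minus_euler_mult:
  fixes L :: "('i::finite) dfun"
  assumes "difffun L" "difffun Q"
  shows "divergence (\<lambda>z. frechet L Q z - euler L z * Q z)"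
proof -
  have "divergence (\<lambda>z. 1 * applyop (frechet_op L) Q z - adjapply (frechet_op L) (\<lambda>z. 1) z * Q z)"
    using assms by (intro divergence_adjoint_by_parts is_dop_frechet_op difffun_const)
  then show ?thesis by (rule divergence_cong) (simp add: frechet_def euler_def)
qed

text \<open>Differentiating \<open>L'(Q) - E\<^sub>u(L) Q \<in> div\<close> in the direction \<open>P\<close>, and symmetrically with \<open>P\<close> and
\<open>Q\<close> exchanged, the second variations of \<open>L\<close> cancel up to \<open>L'\<close> of a commutator, which is again
controlled by the same identity; what remains is \<open>(E'(P) - E'\<^sup>*(P)) Q \<in> div\<close>.\<close>

lemma frechet_euler_self_adjoint:
  fixes L :: "('i::finite) dfun"
  assumes L: "difffun L" and P: "difffun P"
  shows "frechet (euler L) P = adjapply (frechet_op (euler L)) P"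
proof (rule eq_if_pairing_diff_divergence)
  define E where "E = euler L"
  have dE: "difffun E" unfolding E_def using L by (rule difffun_euler)
  fix B :: "'i dfun" assume B: "difffun B"
  let ?C = "\<lambda>z. frechet P B z - frechet B P z"
  have d: "divergence (frechet (\<lambda>z. frechet L P z - E z * P z) B)"
    "divergence (frechet (\<lambda>z. frechet L B z - E z * B z) P)"
    "divergence (\<lambda>z. frechet L ?C z - E z * ?C z)"
    "divergence (\<lambda>z. P z * applyop (frechet_op E) B z - adjapply (frechet_op E) P z * B z)"
    using divergence_frechet_minus_euler_mult L P B dE unfolding E_def
    by (auto intro!: divergence_frechet divergence_adjoint_by_parts difffun_diff difffun_frechet)
  have lin: "frechet (\<lambda>z. frechet L Q z - E z * Q z) R
      = (\<lambda>z. frechet (frechet L Q) R z - (frechet E R z * Q z + E z * frechet Q R z))"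
    if "difffun Q" "difffun R" for Q R
    using L dE that by (simp add: frechet_diff frechet_mult difffun_frechet difffun_mult)
  have sv: "frechet (frechet L P) B z - frechet (frechet L B) P z = frechet L ?C z" for z
    using second_variation[OF L P B] by metis
  show "divergence (\<lambda>z. frechet (euler L) P z * B z - adjapply (frechet_op (euler L)) P z * B z)"
    unfolding E_def[symmetric]
    using divergence_add[OF divergence_diff[OF divergence_diff[OF d(1,2)] d(3)] d(4)]
    by (rule divergence_cong)
       (unfold lin[OF P B] lin[OF B P] sv[symmetric], simp add: frechet_def[symmetric] algebra_simps)
qed (use L P in auto)

lemma adjapply_eq_euler_of_adjoint_symmetry:
  fixes G Q :: "('i::finite) dfun" and R S :: "'i dop"
  assumes G: "difffun G" and Q: "difffun Q" and R: "is_dop R" and S: "is_dop S"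
    and adjsym: "adjapply (frechet_op G) Q = applyop R G"
    and S_eq: "\<And>B. difffun B \<Longrightarrow> applyop S B = (\<lambda>z. adjapply R B z + frechet Q B z)"
  shows "adjapply S G = euler (\<lambda>z. Q z * G z)"
proof (rule eq_if_pairing_diff_divergence)
  fix B :: "'i dfun" assume B: "difffun B"
  have "divergence (\<lambda>z. - (G z * applyop S B z - adjapply S G z * B z)
      + (G z * applyop (frechet_op Q) B z - adjapply (frechet_op Q) G z * B z)
      - (B z * applyop R G z - adjapply R B z * G z))"
    using G Q R S B by (intro divergence_add divergence_diff divergence_cmult[of _ "-1", simplified]
        divergence_adjoint_by_parts is_dop_frechet_op)
  then show "divergence (\<lambda>z. adjapply S G z * B z - euler (\<lambda>z. Q z * G z) z * B z)"
    by (rule divergence_cong)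
       (unfold euler_mult[OF Q G] adjsym S_eq[OF B], simp add: frechet_def algebra_simps)
qed (use G Q S in auto)

theorem proposition4p2:
  fixes G Q P :: "('i::finite) dfun"
    and RQ RP Sop W :: "'i dop"
  assumes "difffun G" and "difffun Q" and "difffun P"
    and "is_dop RQ" and "is_dop RP"
    and adjsym: "adjapply (frechet_op G) Q = applyop RQ G"
    and nonmult: "euler (\<lambda>z. Q z * G z) \<noteq> (\<lambda>z. 0)"
    and sym: "frechet G P = applyop RP G"
    and S_def: "is_dop Sop"
      "\<forall>B. difffun B \<longrightarrow> applyop Sop B = (\<lambda>z. adjapply RQ B z + frechet Q B z)"
    and W_def: "is_dop W" "\<forall>B. difffun B \<longrightarrow> applyop W B = adjapply Sop B"
  shows "euler (\<lambda>z. applyop Sop P z * G z) = (\<lambda>z. 0) \<longleftrightarrow>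
         (\<lambda>z. applyop (\<lambda>J. frechet (W J) P) G z + applyop W (applyop RP G) z
              + adjapply (frechet_op P) (applyop W G) z) = (\<lambda>z. 0)"
proof -
  note G = assms(1) and Q = assms(2) and P = assms(3)
  define E where "E = applyop W G"
  have E: "difffun E" "E = adjapply Sop G"
    unfolding E_def using difffun_applyop[OF W_def(1) G] W_def(2) G by auto
  have E_euler: "E = euler (\<lambda>z. Q z * G z)"
    using adjapply_eq_euler_of_adjoint_symmetry[OF G Q assms(4) S_def(1) adjsym] S_def(2) E(2) by simp
  have "euler (\<lambda>z. applyop Sop P z * G z) = euler (\<lambda>z. E z * P z)"
  proof (rule euler_eq_if_divergence_diff)
    show "divergence (\<lambda>z. applyop Sop P z * G z - E z * P z)"
      using divergence_adjoint_by_parts[OF S_def(1) G P] by (rule divergence_cong) (simp add: E(2) mult_ac)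
  qed (use S_def(1) G E P in auto)
  also have "\<dots> = (\<lambda>z. frechet E P z + adjapply (frechet_op P) E z)"
    using euler_mult[OF E(1) P] frechet_euler_self_adjoint[OF difffun_mult[OF Q G] P] E_euler by simp
  also have "\<dots> = (\<lambda>z. applyop (\<lambda>J. frechet (W J) P) G z + applyop W (applyop RP G) z
              + adjapply (frechet_op P) (applyop W G) z)"
    using frechet_applyop[OF W_def(1) G P] sym by (simp add: E_def)
  finally show ?thesis by simp
qed

end
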